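(* Let $n \ge 0$, let $Z = \sum_{j=1}^m P_j$ be a stable point cluster of degree $m$ in $\mathbb{P}^n(\mathbb{C})$, and fix nonzero row vectors $P_j \in \mathbb{C}^{n+1}$ representing its points. Let $\mathcal{H}$ be the set of positive definite Hermitian $(n+1)\times(n+1)$ matrices of determinant $1$ and $D(Q) = \sum_{j=1}^m \log(\bar{P}_j Q P_j^\top) - \frac{m}{n+1}\log\det Q$ for $Q \in \mathcal{H}$. Then $D$ has a unique critical point $z(Z)$ on $\mathcal{H}$, at which $D$ attains its global minimum, which is of the form $\log\theta$ for some $\theta > 0$. Moreover, $z(Z)$ does not depend on the choice of representing vectors $P_j$, so it depends only on $Z$.
   Context: A point cluster of degree $m$ in $\mathbb{P}^n$ is a formal sum $Z = \sum_{j=1}^m P_j$ of points; for a linear subspace $L$, $Z|_L$ is the sum of the points of $Z$ lying in $L$, and $\deg$ counts points with multiplicity. $Z$ is stable if $(n+1)\deg Z|_L < (\dim L+1)\deg Z$ for every linear subspace $\emptyset \ne L \subsetneq \mathbb{P}^n$. $\mathcal{H}$ is regarded as a real manifold of dimension $n(n+2)$. *)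

theory Defs
  imports "HOL-Analysis.Analysis"
begin

text \<open>Points of P^n are represented by nonzero vectors in complex^'n, where CARD('n) = n+1.
  A point cluster of degree m is a family P 0, ..., P (m-1) of such vectors.\<close>

definition conj_transpose :: "complex^'n^'n \<Rightarrow> complex^'n^'n" where
  "conj_transpose A = (\<chi> i j. cnj (A $ j $ i))"

definition hermitian_mat :: "complex^'n^'n \<Rightarrow> bool" where
  "hermitian_mat A \<longleftrightarrow> conj_transpose A = A"

definition herm_form :: "complex^'n \<Rightarrow> complex^'n^'n \<Rightarrow> complex" where
  "herm_form x A = (\<Sum>a\<in>UNIV. \<Sum>b\<in>UNIV. cnj (x $ a) * A $ a $ b * x $ b)"

definition pos_def_hermitian :: "complex^'n^'n \<Rightarrow> bool" where
  "pos_def_hermitian A \<longleftrightarrow> hermitian_mat A \<and>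
     (\<forall>x. x \<noteq> 0 \<longrightarrow> Im (herm_form x A) = 0 \<and> Re (herm_form x A) > 0)"

definition HH :: "(complex^'n^'n) set" where
  "HH = {Q. pos_def_hermitian Q \<and> det Q = 1}"

text \<open>Stability: for every linear subspace emptyset /= L /= P^n, i.e. complex
  linear subspace W of complex^'n with W /= {0} and W /= UNIV (dim L + 1 = vec.dim W),
  (n+1) deg Z|_L < (dim L + 1) deg Z.\<close>
definition stable_cluster :: "nat \<Rightarrow> (nat \<Rightarrow> complex^'n) \<Rightarrow> bool" where
  "stable_cluster m P \<longleftrightarrow>
     (\<forall>W :: (complex^'n) set. vec.subspace W \<and> W \<noteq> {0} \<and> W \<noteq> UNIV \<longrightarrow>
        CARD('n) * card {j. j < m \<and> P j \<in> W} < vec.dim W * m)"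

definition DD :: "nat \<Rightarrow> (nat \<Rightarrow> complex^'n) \<Rightarrow> complex^'n^'n \<Rightarrow> real" where
  "DD m P Q = (\<Sum>j<m. ln (Re (herm_form (P j) Q)))
              - real m / real CARD('n) * ln (Re (det Q))"

definition critical_on_HH :: "nat \<Rightarrow> (nat \<Rightarrow> complex^'n) \<Rightarrow> complex^'n^'n \<Rightarrow> bool" where
  "critical_on_HH m P Q \<longleftrightarrow> Q \<in> HH \<and>
     (\<forall>\<gamma> :: real \<Rightarrow> complex^'n^'n. (\<forall>t. \<gamma> t \<in> HH) \<and> \<gamma> 0 = Q \<and> \<gamma> differentiable (at 0)
        \<longrightarrow> ((\<lambda>t. DD m P (\<gamma> t)) has_real_derivative 0) (at 0))"

end

theory Submission
  imports Defs
begin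

text \<open>Fix \<open>G \<in> H\<close> and a frame \<open>u\<close> orthonormal for the form of \<open>G\<close>. By simultaneous
  diagonalization every \<open>Q \<in> H\<close> is \<open>\<Sum>\<^sub>i exp (\<nu>\<^sub>i) (G u\<^sub>i)(G u\<^sub>i)\<^sup>*\<close> with \<open>\<Sum>\<^sub>i \<nu>\<^sub>i = 0\<close>, and then
  \<open>D(Q) = \<Sum>\<^sub>j log \<Sum>\<^sub>i exp (\<nu>\<^sub>i) |\<langle>u\<^sub>i, P\<^sub>j\<rangle>\<^sub>G|\<^sup>2\<close>, a sum of log-sum-exp functions of \<open>\<nu>\<close>.

  Uniqueness: if \<open>G\<close> and \<open>Q\<close> are both critical, the slope of \<open>D\<close> along \<open>t \<mapsto> t\<nu>\<close> is nondecreasing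
  and vanishes at \<open>t = 0\<close> and \<open>t = 1\<close>, so \<open>\<nu>\<close> is constant on the coordinate support of every \<open>P\<^sub>j\<close>.
  A nonconstant \<open>\<nu>\<close> would then split the points between the spans of two complementary parts of the
  frame, which stability forbids; hence \<open>\<nu> = 0\<close> and \<open>Q = G\<close>.

  Existence: the slope at infinity of \<open>D\<close> along \<open>t \<mapsto> t\<nu>\<close> is a Hilbert--Mumford weight, which
  stability bounds below by a positive multiple of \<open>max \<nu> - min \<nu>\<close>. Together with compactness of the
  space of frames this makes sublevel sets of \<open>D\<close> compact, so \<open>D\<close> attains its minimum, which is a
  critical point. Rescaling the \<open>P\<^sub>j\<close> only adds a constant to \<open>D\<close>.\<close>

definition cinner :: "complex^'n \<Rightarrow> complex^'n \<Rightarrow> complex" where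
  "cinner x y = (\<Sum>a\<in>UNIV. cnj (x $ a) * y $ a)"

definition sesq :: "complex^'n^'n \<Rightarrow> complex^'n \<Rightarrow> complex^'n \<Rightarrow> complex" where
  "sesq A x y = (\<Sum>a\<in>UNIV. \<Sum>b\<in>UNIV. cnj (x $ a) * A $ a $ b * y $ b)"

lemma herm_form_eq_sesq: "herm_form x A = sesq A x x"
  by (simp add: herm_form_def sesq_def)

lemma sesq_eq_cinner: "sesq A x y = cinner x (A *v y)"
  by (simp add: sesq_def cinner_def matrix_vector_mult_def sum_distrib_left mult.assoc)

lemma cinner_commute: "cinner y x = cnj (cinner x y)"
  by (simp add: cinner_def mult.commute)

lemma cinner_add_right: "cinner x (y + z) = cinner x y + cinner x z"
  by (simp add: cinner_def distrib_left sum.distrib)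
lemma cinner_add_left: "cinner (y + z) x = cinner y x + cinner z x"
  by (simp add: cinner_def distrib_right sum.distrib)
lemma cinner_diff_right: "cinner x (y - z) = cinner x y - cinner x z"
  by (simp add: cinner_def right_diff_distrib sum_subtractf)
lemma cinner_diff_left: "cinner (y - z) x = cinner y x - cinner z x"
  by (simp add: cinner_def left_diff_distrib sum_subtractf)
lemma cinner_smult_right: "cinner x (c *s y) = c * cinner x y"
  by (simp add: cinner_def sum_distrib_left algebra_simps)
lemma cinner_smult_left: "cinner (c *s y) x = cnj c * cinner y x"
  by (simp add: cinner_def sum_distrib_left algebra_simps)
lemma cinner_zero_right[simp]: "cinner x 0 = 0" by (simp add: cinner_def)
lemma cinner_zero_left[simp]: "cinner 0 x = 0" by (simp add: cinner_def)
lemma cinner_sum_left: "cinner (\<Sum>i\<in>S. f i) x = (\<Sum>i\<in>S. cinner (f i) x)"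
  by (induct S rule: infinite_finite_induct) (simp_all add: cinner_add_left)
lemma cnj_mult_self: "cnj z * z = of_real ((cmod z)^2)"
  by (metis complex_norm_square mult.commute)

lemma cinner_self_eq_sum: "cinner x x = of_real (\<Sum>a\<in>UNIV. (cmod (x $ a))^2)"
  unfolding cinner_def cnj_mult_self of_real_sum ..

lemma cinner_self_norm: "cinner x x = of_real ((norm x)^2)"
  unfolding cinner_self_eq_sum norm_vec_def L2_set_def
  by (simp add: sum_nonneg)

lemma cinner_self_eq_0: "cinner x x = 0 \<longleftrightarrow> x = 0"
  by (simp add: cinner_self_norm)

lemma cinner_mat_adjoint: "cinner x (A *v y) = cinner (conj_transpose A *v x) y"
proof -
  have "cinner x (A *v y) = (\<Sum>a\<in>UNIV. \<Sum>b\<in>UNIV. cnj (x $ a) * A $ a $ b * y $ b)"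
    by (simp add: cinner_def matrix_vector_mult_def sum_distrib_left mult.assoc)
  also have "\<dots> = (\<Sum>b\<in>UNIV. \<Sum>a\<in>UNIV. cnj (x $ a) * A $ a $ b * y $ b)"
    by (rule sum.swap)
  also have "\<dots> = cinner (conj_transpose A *v x) y"
    by (simp add: cinner_def matrix_vector_mult_def conj_transpose_def sum_distrib_left sum_distrib_right mult.commute mult.left_commute)
  finally show ?thesis .
qed

lemma cinner_hermitian_mat: "hermitian_mat A \<Longrightarrow> cinner x (A *v y) = cinner (A *v x) y"
  by (metis hermitian_mat_def cinner_mat_adjoint)

lemma sesq_hermitian_cnj: "hermitian_mat A \<Longrightarrow> sesq A x y = cnj (sesq A y x)"
  by (metis cinner_hermitian_mat cinner_commute sesq_eq_cinner)

lemma sesq_add_right: "sesq A x (y + z) = sesq A x y + sesq A x z"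
  by (simp add: sesq_eq_cinner matrix_vector_right_distrib cinner_add_right)
lemma sesq_add_left: "sesq A (y + z) x = sesq A y x + sesq A z x"
  by (simp add: sesq_eq_cinner cinner_add_left)
lemma sesq_diff_right: "sesq A x (y - z) = sesq A x y - sesq A x z"
  by (simp add: sesq_eq_cinner matrix_vector_mult_diff_distrib cinner_diff_right)
lemma sesq_smult_right: "sesq A x (c *s y) = c * sesq A x y"
  by (simp add: sesq_eq_cinner cinner_smult_right vector_scalar_commute)
lemma sesq_smult_left: "sesq A (c *s y) x = cnj c * sesq A y x"
  by (simp add: sesq_eq_cinner cinner_smult_left)
lemma sesq_zero_right[simp]: "sesq A x 0 = 0" by (simp add: sesq_def)
lemma sesq_zero_left[simp]: "sesq A 0 x = 0" by (simp add: sesq_def)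
lemma sesq_sum_right: "sesq A x (\<Sum>i\<in>S. f i) = (\<Sum>i\<in>S. sesq A x (f i))"
  by (induct S rule: infinite_finite_induct) (simp_all add: sesq_add_right)
lemma sesq_sum_left: "sesq A (\<Sum>i\<in>S. f i) x = (\<Sum>i\<in>S. sesq A (f i) x)"
  by (induct S rule: infinite_finite_induct) (simp_all add: sesq_add_left)

lemma sesq_mat_1: "sesq (mat 1) x y = cinner x y"
  by (simp add: sesq_eq_cinner)

lemma sesq_mat_diff: "sesq (A - B) x y = sesq A x y - sesq B x y"
  by (simp add: sesq_def algebra_simps sum_subtractf)

lemma sesq_axis: "sesq C (axis a c) (axis b d) = cnj c * C $ a $ b * d"
proof -
  have "sesq C (axis a c) (axis b d) = cinner (axis a c) (C *v axis b d)" by (simp add: sesq_eq_cinner)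
  also have "C *v axis b d = (\<chi> i. C $ i $ b * d)"
    by (simp add: matrix_vector_mult_def axis_def vec_eq_iff if_distrib[of "\<lambda>x. _ * x"] cong: if_cong)
  also have "cinner (axis a c) (\<chi> i. C $ i $ b * d) = cnj c * C $ a $ b * d"
    by (simp add: cinner_def axis_def mult.assoc if_distrib[of cnj] if_distrib[of "\<lambda>x. x * _"] cong: if_cong)
  finally show ?thesis .
qed

lemma sesq_axis_1: "sesq C (axis a 1) (axis b 1) = C $ a $ b"
  by (simp add: sesq_axis)

lemma sesq_diag_zero_imp_zero:
  fixes C :: "complex^'n^'n"
  assumes h: "\<And>x. sesq C x x = 0"
  shows "C = 0"
proof -
  have "C $ a $ b = 0" for a b
  proof -
    have aa: "C $ a $ a = 0" "C $ b $ b = 0" using h[of "axis a 1"] h[of "axis b 1"]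
      by (simp_all add: sesq_axis_1)
    have e: "sesq C (axis a 1 + axis b c) (axis a 1 + axis b c)
        = C $ a $ a + C $ a $ b * c + cnj c * C $ b $ a + cnj c * C $ b $ b * c" for c
      by (simp add: sesq_add_left sesq_add_right sesq_axis)
    have 1: "C $ a $ b + C $ b $ a = 0" using e[of 1] h aa by simp
    have 2: "C $ a $ b * \<i> - \<i> * C $ b $ a = 0" using e[of "\<i>"] h aa by simp
    have "2 * \<i> * C$a$b = 0" using 1 2 by algebra
    then show ?thesis by simp
  qed
  then show ?thesis by (simp add: vec_eq_iff)
qed

lemma mat_eq_if_sesq_diag_eq:
  fixes A B :: "complex^'n^'n"
  assumes "\<And>x. sesq A x x = sesq B x x"
  shows "A = B"
  using sesq_diag_zero_imp_zero[of "A - B"] assms by (simp add: sesq_mat_diff)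

definition outer_prod :: "complex^'n \<Rightarrow> complex^'n^'n" where
  "outer_prod v = (\<chi> a b. v $ a * cnj (v $ b))"

definition frame_mat :: "('n \<Rightarrow> complex^'n) \<Rightarrow> ('n \<Rightarrow> real) \<Rightarrow> complex^'n^'n" where
  "frame_mat w \<mu> = (\<Sum>i\<in>UNIV. \<mu> i *\<^sub>R outer_prod (w i))"

lemma sesq_mat_add: "sesq (A + B) x y = sesq A x y + sesq B x y"
  by (simp add: sesq_def algebra_simps sum.distrib)
lemma sesq_mat_zero[simp]: "sesq 0 x y = 0" by (simp add: sesq_def)
lemma sesq_mat_sum: "sesq (\<Sum>i\<in>S. f i) x y = (\<Sum>i\<in>S. sesq (f i) x y)"
  by (induct S rule: infinite_finite_induct) (simp_all add: sesq_mat_add)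
lemma sesq_mat_scaleR: "sesq (r *\<^sub>R A) x y = of_real r * sesq A x y"
  unfolding sesq_def by (simp add: sum_distrib_left, simp add: scaleR_conv_of_real mult_ac)
lemma outer_prod_mult: "outer_prod v *v y = cinner v y *s v"
  by (simp add: outer_prod_def matrix_vector_mult_def cinner_def vec_eq_iff sum_distrib_left mult_ac)
lemma sesq_outer_prod: "sesq (outer_prod v) x y = cinner x v * cinner v y"
  by (simp add: sesq_eq_cinner outer_prod_mult cinner_smult_right)

lemma frame_mat_nth: "frame_mat w \<mu> $ a $ b = (\<Sum>i\<in>UNIV. of_real (\<mu> i) * (w i $ a * cnj (w i $ b)))"
  by (simp add: frame_mat_def outer_prod_def sum_component, simp add: scaleR_conv_of_real)

lemma sesq_frame_mat: "sesq (frame_mat w \<mu>) x y = (\<Sum>i\<in>UNIV. of_real (\<mu> i) * (cinner x (w i) * cinner (w i) y))"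
  by (simp add: frame_mat_def sesq_mat_sum sesq_mat_scaleR sesq_outer_prod)

definition frame_cols :: "('n \<Rightarrow> complex^'n) \<Rightarrow> complex^'n^'n" where
  "frame_cols w = (\<chi> a i. w i $ a)"

definition real_diag :: "('n \<Rightarrow> real) \<Rightarrow> complex^'n^'n" where
  "real_diag \<mu> = (\<chi> i k. if i = k then of_real (\<mu> i) else 0)"

lemma frame_cols_real_diag: "frame_cols w ** real_diag \<mu> = (\<chi> a i. w i $ a * of_real (\<mu> i))"
  by (simp add: vec_eq_iff matrix_matrix_mult_def frame_cols_def real_diag_def if_distrib[of "\<lambda>x. _ * x"] cong: if_cong)

lemma frame_mat_factor: "frame_mat w \<mu> = frame_cols w ** real_diag \<mu> ** conj_transpose (frame_cols w)"
  unfolding frame_cols_real_diag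
  by (simp add: vec_eq_iff frame_mat_nth matrix_matrix_mult_def frame_cols_def conj_transpose_def mult_ac)

lemma herm_form_frame_mat: "herm_form x (frame_mat w \<mu>) = of_real (\<Sum>i\<in>UNIV. \<mu> i * (cmod (cinner (w i) x))^2)"
proof -
  have "herm_form x (frame_mat w \<mu>) = (\<Sum>i\<in>UNIV. of_real (\<mu> i) * (cnj (cinner (w i) x) * cinner (w i) x))"
    by (simp add: herm_form_eq_sesq sesq_frame_mat cinner_commute[of x])
  also have "\<dots> = of_real (\<Sum>i\<in>UNIV. \<mu> i * (cmod (cinner (w i) x))^2)"
    by (simp add: cnj_mult_self of_real_sum)
  finally show ?thesis .
qed

lemma hermitian_frame_mat: "hermitian_mat (frame_mat w \<mu>)"
  by (simp add: hermitian_mat_def conj_transpose_def vec_eq_iff frame_mat_nth mult.commute)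

lemma det_cnj_entries: "det (\<chi> i j. cnj (A $ i $ j)) = cnj (det (A::complex^'n^'n))"
  by (simp add: det_def)

lemma det_conj_transpose: "det (conj_transpose A) = cnj (det (A::complex^'n^'n))"
proof -
  have "conj_transpose A = transpose (\<chi> i j. cnj (A $ i $ j))"
    by (simp add: conj_transpose_def transpose_def)
  then show ?thesis by (simp add: det_cnj_entries)
qed

lemma det_real_diag: "det (real_diag \<mu>) = of_real (\<Prod>i\<in>UNIV. \<mu> i)"
  by (subst det_diagonal) (simp_all add: real_diag_def)

lemma mult_cnj_self: "z * cnj z = (of_real (cmod z))^2"
  by (metis complex_norm_square of_real_power)

lemma det_frame_mat: "det (frame_mat w \<mu>) = of_real ((\<Prod>i\<in>UNIV. \<mu> i) * (cmod (det (frame_cols w)))^2)"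
  by (simp add: frame_mat_factor det_mul det_conj_transpose det_real_diag mult_cnj_self mult_ac)

lemma pos_def_hermitian_imp_hermitian: "pos_def_hermitian G \<Longrightarrow> hermitian_mat G"
  by (simp add: pos_def_hermitian_def)

lemma sesq_self_real: "hermitian_mat A \<Longrightarrow> sesq A x x = of_real (Re (sesq A x x))"
proof -
  assume h: "hermitian_mat A"
  have "sesq A x x = cnj (sesq A x x)" by (rule sesq_hermitian_cnj[OF h])
  then have "Im (sesq A x x) = 0" by (simp add: complex_eq_iff)
  then show ?thesis by (simp add: complex_eq_iff)
qed

lemma pos_def_sesq_pos: "pos_def_hermitian G \<Longrightarrow> x \<noteq> 0 \<Longrightarrow> Re (sesq G x x) > 0"
  by (simp add: pos_def_hermitian_def herm_form_eq_sesq)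

lemma pos_def_sesq_nonzero: "pos_def_hermitian G \<Longrightarrow> x \<noteq> 0 \<Longrightarrow> sesq G x x \<noteq> 0"
  using pos_def_sesq_pos by fastforce

lemma continuous_on_Re_sesq_self: "continuous_on S (\<lambda>x. Re (sesq A x x))"
  unfolding sesq_def by (intro continuous_intros)

lemma sesq_add_scaled_self: "sesq A (x + c *s y) (x + c *s y)
   = sesq A x x + c * sesq A x y + cnj c * sesq A y x + cnj c * c * sesq A y y"
  unfolding sesq_add_left sesq_add_right sesq_smult_left sesq_smult_right
  by (simp add: algebra_simps)

lemma sesq_scaled_self: "sesq A (c *s y) (c *s y) = cnj c * c * sesq A y y"
  by (simp add: sesq_smult_left sesq_smult_right mult_ac)

lemma scaleR_vec_eq_smult: "(r::real) *\<^sub>R (x::complex^'n) = of_real r *s x"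
  by (simp add: vec_eq_iff, simp add: scaleR_conv_of_real)

lemma pos_def_sesq_lower_bound:
  assumes G: "pos_def_hermitian G"
  shows "\<exists>c>0. \<forall>x. c * (norm x)^2 \<le> Re (sesq G x x)"
proof -
  have ne: "sphere (0::complex^'n) 1 \<noteq> {}"
  proof -
    have "axis undefined (1::complex) \<in> sphere (0::complex^'n) 1" by (simp add: norm_axis_1)
    then show ?thesis by blast
  qed
  obtain x1 where x1: "x1 \<in> sphere 0 1" and min: "\<forall>y\<in>sphere 0 1. Re (sesq G x1 x1) \<le> Re (sesq G y y)"
    using continuous_attains_inf[OF compact_sphere ne continuous_on_Re_sesq_self[of _ G]] by blast
  have x1nz: "x1 \<noteq> 0" using x1 by auto
  define c where "c = Re (sesq G x1 x1)"
  have cpos: "c > 0" using pos_def_sesq_pos[OF G x1nz] by (simp add: c_def)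
  have "c * (norm x)^2 \<le> Re (sesq G x x)" for x
  proof (cases "x = 0")
    case True then show ?thesis by simp
  next
    case False
    define v where "v = (1 / norm x) *\<^sub>R x"
    have v: "v \<in> sphere 0 1" using False by (simp add: v_def)
    have xv: "x = of_real (norm x) *s v"
      using False by (simp add: v_def scaleR_vec_eq_smult[symmetric])
    have "Re (sesq G x x) = (norm x)^2 * Re (sesq G v v)"
      by (subst xv, subst xv, simp add: sesq_scaled_self power2_eq_square)
    moreover have "c \<le> Re (sesq G v v)" using min v by (simp add: c_def)
    ultimately show ?thesis by (metis mult.commute mult_right_mono zero_le_power2)
  qed
  with cpos show ?thesis by blast
qed

section \<open>Simultaneous diagonalization\<close>

definition orthonormal_wrt :: "complex^'n^'n \<Rightarrow> ('n \<Rightarrow> complex^'n) \<Rightarrow> bool" where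
  "orthonormal_wrt G u \<longleftrightarrow> (\<forall>i k. sesq G (u i) (u k) = (if i = k then 1 else 0))"

lemma independent_if_orthogonal_wrt:
  assumes G: "pos_def_hermitian G"
    and nz: "\<And>v. v \<in> S \<Longrightarrow> sesq G v v \<noteq> 0"
    and orth: "\<And>v w. v \<in> S \<Longrightarrow> w \<in> S \<Longrightarrow> v \<noteq> w \<Longrightarrow> sesq G v w = 0"
  shows "vec.independent S"
  unfolding vec.independent_explicit_module
proof (intro allI impI)
  fix t u v
  assume t: "finite t" "t \<subseteq> S" and s: "(\<Sum>v\<in>t. u v *s v) = 0" and v: "v \<in> t"
  have "0 = sesq G v (\<Sum>w\<in>t. u w *s w)" using s by simp
  also have "\<dots> = (\<Sum>w\<in>t. u w * sesq G v w)" by (simp add: sesq_sum_right sesq_smult_right)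
  also have "\<dots> = u v * sesq G v v + (\<Sum>w\<in>t - {v}. u w * sesq G v w)"
    by (rule sum.remove[OF t(1) v])
  also have "(\<Sum>w\<in>t - {v}. u w * sesq G v w) = 0"
    using t v by (intro sum.neutral) (auto intro!: orth)
  finally have "u v * sesq G v v = 0" by simp
  then show "u v = 0" using nz[of v] t v by auto
qed

lemma orthonormal_wrt_inj: "orthonormal_wrt G u \<Longrightarrow> inj u"
  unfolding orthonormal_wrt_def inj_def
proof (intro allI impI)
  fix x y assume h: "\<forall>i k. sesq G (u i) (u k) = (if i = k then 1 else 0)" and e: "u x = u y"
  have "sesq G (u x) (u y) = 1" using h e by (metis (full_types))
  then show "x = y" using h by (metis zero_neq_one)
qed

lemma orthonormal_expansion:
  fixes u :: "'n \<Rightarrow> complex^'n" and G :: "complex^'n^'n"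
  assumes G: "pos_def_hermitian G" and u: "orthonormal_wrt G u"
  shows "x = (\<Sum>i\<in>UNIV. sesq G (u i) x *s u i)"
proof (rule ccontr)
  assume ne: "x \<noteq> (\<Sum>i\<in>UNIV. sesq G (u i) x *s u i)"
  define y where "y = x - (\<Sum>i\<in>UNIV. sesq G (u i) x *s u i)"
  have ynz: "y \<noteq> 0" using ne by (simp add: y_def)
  have yo: "sesq G (u k) y = 0" for k
  proof -
    have "sesq G (u k) y = sesq G (u k) x - (\<Sum>i\<in>UNIV. sesq G (u i) x * sesq G (u k) (u i))"
      by (simp add: y_def sesq_diff_right sesq_sum_right sesq_smult_right)
    also have "(\<Sum>i\<in>UNIV. sesq G (u i) x * sesq G (u k) (u i)) = sesq G (u k) x"
      using u by (simp add: orthonormal_wrt_def if_distrib[of "\<lambda>z. _ * z"] cong: if_cong)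
    finally show ?thesis by simp
  qed
  have yo2: "sesq G y (u k) = 0" for k
    using sesq_hermitian_cnj[OF pos_def_hermitian_imp_hermitian[OF G], of y "u k"] yo[of k] by simp
  define S where "S = insert y (range u)"
  have ind: "vec.independent S"
  proof (rule independent_if_orthogonal_wrt[OF G])
    fix v assume "v \<in> S"
    then show "sesq G v v \<noteq> 0" using pos_def_sesq_nonzero[OF G ynz] u by (auto simp: S_def orthonormal_wrt_def)
  next
    fix v w assume "v \<in> S" "w \<in> S" "v \<noteq> w"
    then show "sesq G v w = 0" using u yo yo2 by (auto simp: S_def orthonormal_wrt_def)
  qed
  have ynot: "y \<notin> range u"
  proof
    assume "y \<in> range u"
    then obtain k where "y = u k" by blast
    then have "sesq G (u k) (u k) = 0" using yo[of k] by simp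
    then show False using u by (simp add: orthonormal_wrt_def)
  qed
  have "card S = Suc CARD('n)"
    using ynot orthonormal_wrt_inj[OF u] by (simp add: S_def card_image)
  moreover have "card S \<le> CARD('n)"
    using vec.independent_bound_general[OF ind] dim_subset_UNIV_cart_gen[of S] by simp
  ultimately show False by simp
qed

lemma orthonormal_coord_nonzero:
  assumes G: "pos_def_hermitian G" and u: "orthonormal_wrt G u" and x: "x \<noteq> 0"
  shows "\<exists>i. sesq G (u i) x \<noteq> 0"
proof (rule ccontr)
  assume "\<not> ?thesis"
  then have "x = (\<Sum>i\<in>UNIV. 0 *s u i)" using orthonormal_expansion[OF G u, of x] by simp
  then show False using x by simp
qed

lemma sesq_orthonormal_expansion:
  assumes G: "pos_def_hermitian G" and u: "orthonormal_wrt G u"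
  shows "sesq A x y = (\<Sum>i\<in>UNIV. \<Sum>k\<in>UNIV. cnj (sesq G (u i) x) * sesq G (u k) y * sesq A (u i) (u k))"
proof -
  have "sesq A x y = sesq A (\<Sum>i\<in>UNIV. sesq G (u i) x *s u i) (\<Sum>k\<in>UNIV. sesq G (u k) y *s u k)"
    using orthonormal_expansion[OF G u, of x] orthonormal_expansion[OF G u, of y] by simp
  also have "\<dots> = (\<Sum>i\<in>UNIV. \<Sum>k\<in>UNIV. cnj (sesq G (u i) x) * sesq G (u k) y * sesq A (u i) (u k))"
    unfolding sesq_sum_left sesq_smult_left sesq_sum_right sesq_smult_right sum_distrib_left
    by (subst sum.swap) (simp add: mult_ac)
  finally show ?thesis .
qed

lemma sesq_gen_eigenvectors:
  assumes "\<And>i. A *v u i = of_real (\<mu> i) *s (G *v u i)" and u: "orthonormal_wrt G u"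
  shows "sesq A (u i) (u k) = (if i = k then of_real (\<mu> i) else 0)"
proof -
  have "sesq A (u i) (u k) = of_real (\<mu> k) * sesq G (u i) (u k)"
    unfolding sesq_eq_cinner assms cinner_smult_right ..
  then show ?thesis using u by (simp add: orthonormal_wrt_def)
qed

lemma sesq_self_gen_eigenbasis:
  assumes G: "pos_def_hermitian G" and u: "orthonormal_wrt G u"
    and e: "\<And>i. A *v u i = of_real (\<mu> i) *s (G *v u i)"
  shows "sesq A x x = of_real (\<Sum>i\<in>UNIV. \<mu> i * (cmod (sesq G (u i) x))^2)"
proof -
  have "sesq A x x = (\<Sum>i\<in>UNIV. \<Sum>k\<in>UNIV. cnj (sesq G (u i) x) * sesq G (u k) x *
          (if i = k then of_real (\<mu> i) else 0))"
    using sesq_orthonormal_expansion[OF G u, of A x x] sesq_gen_eigenvectors[OF e u] by simp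
  also have "\<dots> = (\<Sum>i\<in>UNIV. of_real (\<mu> i) * (cnj (sesq G (u i) x) * sesq G (u i) x))"
    by (simp add: if_distrib[of "\<lambda>z. _ * z"] mult_ac cong: if_cong)
  also have "\<dots> = of_real (\<Sum>i\<in>UNIV. \<mu> i * (cmod (sesq G (u i) x))^2)"
    by (simp add: cnj_mult_self of_real_sum)
  finally show ?thesis .
qed

lemma continuous_on_sesq_self: "continuous_on S (\<lambda>x. sesq A x x)"
  unfolding sesq_def by (intro continuous_intros)

lemma linear_coeff_zero_if_nonpos:
  fixes r K :: real
  assumes h: "\<And>t. 2 * t * r + t^2 * K \<le> 0"
  shows "r = 0"
proof (rule ccontr)
  assume r: "r \<noteq> 0"
  define d where "d = \<bar>K\<bar> + 1"
  define t where "t = r / d"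
  have d: "d > 0" by (simp add: d_def)
  have "2 * t * r + t^2 * K = r^2 * (2 * d + K) / d^2"
    using d by (simp add: t_def field_simps power2_eq_square)
  moreover have "r^2 * (2 * d + K) / d^2 > 0"
    using r d by (intro divide_pos_pos mult_pos_pos) (auto simp: d_def)
  ultimately show False using h[of t] by simp
qed

lemma closed_vec_subspace:
  fixes W :: "(complex^'n) set"
  assumes "vec.subspace W"
  shows "closed W"
proof (rule closed_subspace)
  show "subspace W"
    using assms unfolding subspace_def vec.subspace_def by (simp add: scaleR_vec_eq_smult)
qed

lemma sesq_normalized:
  fixes G A :: "complex^'n^'n"
  assumes G: "pos_def_hermitian G" and A: "hermitian_mat A" and z: "z \<noteq> 0"
  defines "c \<equiv> complex_of_real (1 / sqrt (Re (sesq G z z)))"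
  shows "sesq G (c *s z) (c *s z) = 1"
    and "Re (sesq A (c *s z) (c *s z)) = Re (sesq A z z) / Re (sesq G z z)"
proof -
  define g where "g = Re (sesq G z z)"
  have g: "g > 0" using pos_def_sesq_pos[OF G z] by (simp add: g_def)
  have cc: "cnj c * c = of_real (1 / g)"
    using g by (simp add: c_def g_def[symmetric] real_sqrt_mult[symmetric] of_real_mult[symmetric]
        del: of_real_mult)
  define a where "a = Re (sesq A z z)"
  have "sesq G z z = of_real g"
    using sesq_self_real[OF pos_def_hermitian_imp_hermitian[OF G], of z] by (simp add: g_def)
  moreover have "sesq A z z = of_real a" using sesq_self_real[OF A, of z] by (simp add: a_def)
  ultimately show "sesq G (c *s z) (c *s z) = 1"
    and "Re (sesq A (c *s z) (c *s z)) = Re (sesq A z z) / Re (sesq G z z)"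
    unfolding a_def[symmetric] g_def[symmetric] using g by (simp_all add: sesq_scaled_self cc)
qed

lemma compact_sesq_unit_sphere:
  fixes G :: "complex^'n^'n"
  assumes G: "pos_def_hermitian G" and W: "vec.subspace W"
  shows "compact (W \<inter> {x. sesq G x x = 1})"
proof -
  obtain c where c: "c > 0" "\<And>x. c * (norm x)^2 \<le> Re (sesq G x x)"
    using pos_def_sesq_lower_bound[OF G] by blast
  have "norm x \<le> sqrt (1 / c)" if "sesq G x x = 1" for x
  proof -
    have "(norm x)^2 \<le> 1 / c" using c(2)[of x] c(1) that by (simp add: field_simps)
    then show ?thesis by (simp add: real_le_rsqrt)
  qed
  then have "bounded (W \<inter> {x. sesq G x x = 1})" by (auto simp: bounded_iff)
  moreover have "closed (W \<inter> {x. sesq G x x = 1})"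
    by (intro closed_Int closed_vec_subspace[OF W] closed_Collect_eq continuous_on_sesq_self
        continuous_on_const)
  ultimately show ?thesis by (simp add: compact_eq_bounded_closed)
qed

lemma Rayleigh_quotient_attains_max:
  fixes G A :: "complex^'n^'n"
  assumes G: "pos_def_hermitian G" and A: "hermitian_mat A"
    and W: "vec.subspace W" "W \<noteq> {0}"
  obtains x0 where "x0 \<in> W" "sesq G x0 x0 = 1"
    "\<And>z. z \<in> W \<Longrightarrow> Re (sesq A z z) \<le> Re (sesq A x0 x0) * Re (sesq G z z)"
proof -
  define Sph where "Sph = W \<inter> {x. sesq G x x = 1}"
  let ?c = "\<lambda>z. complex_of_real (1 / sqrt (Re (sesq G z z)))"
  have normalize: "?c z *s z \<in> Sph" if "z \<in> W" "z \<noteq> 0" for z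
    using sesq_normalized(1)[OF G A that(2)] vec.subspace_scale[OF W(1) that(1)] by (simp add: Sph_def)
  obtain r where "r \<in> W" "r \<noteq> 0" using W vec.subspace_0 by blast
  then have "Sph \<noteq> {}" using normalize by blast
  then obtain x0 where x0: "x0 \<in> Sph" and xmax: "\<And>y. y \<in> Sph \<Longrightarrow> Re (sesq A y y) \<le> Re (sesq A x0 x0)"
    using continuous_attains_sup[OF compact_sesq_unit_sphere[OF G W(1)] _ continuous_on_Re_sesq_self]
    unfolding Sph_def by blast
  show thesis
  proof (rule that)
    show "x0 \<in> W" "sesq G x0 x0 = 1" using x0 by (auto simp: Sph_def)
    fix z assume z: "z \<in> W"
    show "Re (sesq A z z) \<le> Re (sesq A x0 x0) * Re (sesq G z z)"
    proof (cases "z = 0")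
      case False
      have "Re (sesq A z z) / Re (sesq G z z) = Re (sesq A (?c z *s z) (?c z *s z))"
        using sesq_normalized(2)[OF G A False] by simp
      also have "\<dots> \<le> Re (sesq A x0 x0)" using normalize[OF z False] by (rule xmax)
      finally show ?thesis using pos_def_sesq_pos[OF G False] by (simp add: divide_le_eq mult.commute)
    qed simp
  qed
qed

text \<open>First variation of the Rayleigh quotient at its maximum along \<open>x0 + t y\<close> and \<open>x0 + i t y\<close>.\<close>

lemma Rayleigh_max_orthogonal:
  fixes G A :: "complex^'n^'n"
  assumes G: "pos_def_hermitian G" and A: "hermitian_mat A"
    and W: "vec.subspace W" and x0: "x0 \<in> W" "sesq G x0 x0 = 1"
    and max: "\<And>z. z \<in> W \<Longrightarrow> Re (sesq A z z) \<le> \<mu> * Re (sesq G z z)"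
    and \<mu>: "sesq A x0 x0 = of_real \<mu>"
    and y: "y \<in> W" "sesq G x0 y = 0"
  shows "sesq A x0 y = 0"
proof -
  define a where "a = sesq A x0 y"
  have yG: "sesq G y x0 = 0"
    using sesq_hermitian_cnj[OF pos_def_hermitian_imp_hermitian[OF G], of y x0] y(2) by simp
  have yA: "sesq A y x0 = cnj a" using sesq_hermitian_cnj[OF A, of y x0] by (simp add: a_def)
  define K where "K = Re (sesq A y y) - \<mu> * Re (sesq G y y)"
  have along: "2 * t * Re (c * a) + t^2 * K \<le> 0" if c: "cnj c * c = 1" for c t
  proof -
    let ?x = "x0 + (of_real t * c) *s y"
    have "?x \<in> W" using W x0(1) y(1) by (simp add: vec.subspace_add vec.subspace_scale)
    then have le: "Re (sesq A ?x ?x) \<le> \<mu> * Re (sesq G ?x ?x)" by (rule max)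
    have cc: "cnj (of_real t * c) * (of_real t * c) = of_real (t^2)"
      using c by (simp add: power2_eq_square mult_ac)
    have "sesq A ?x ?x = of_real \<mu> + of_real t * (c * a) + of_real t * cnj (c * a) + of_real (t^2) * sesq A y y"
      by (simp only: sesq_add_scaled_self \<mu> yA a_def[symmetric] cc) (simp add: algebra_simps)
    moreover have "sesq G ?x ?x = 1 + of_real (t^2) * sesq G y y"
      by (simp only: sesq_add_scaled_self x0(2) yG y(2) cc) simp
    ultimately show ?thesis using le by (simp add: K_def algebra_simps power2_eq_square)
  qed
  have "Re a = 0" using along[of 1] by (intro linear_coeff_zero_if_nonpos[of _ K]) simp
  moreover have "- Im a = 0" using along[of \<i>] by (intro linear_coeff_zero_if_nonpos[of _ K]) simp
  ultimately show ?thesis by (simp add: a_def[symmetric] complex_eq_iff)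
qed

lemma Rayleigh_max_gen_eigen:
  fixes G A :: "complex^'n^'n"
  assumes G: "pos_def_hermitian G" and A: "hermitian_mat A"
    and W: "vec.subspace W" and x0: "x0 \<in> W" "sesq G x0 x0 = 1"
    and max: "\<And>z. z \<in> W \<Longrightarrow> Re (sesq A z z) \<le> \<mu> * Re (sesq G z z)"
    and \<mu>: "\<mu> = Re (sesq A x0 x0)"
    and y: "y \<in> W"
  shows "sesq A y x0 = of_real \<mu> * sesq G y x0"
proof -
  have Gh: "hermitian_mat G" using G by (rule pos_def_hermitian_imp_hermitian)
  have \<mu>': "sesq A x0 x0 = of_real \<mu>" using sesq_self_real[OF A, of x0] \<mu> by simp
  define \<alpha> where "\<alpha> = sesq G x0 y"
  define y' where "y' = y - \<alpha> *s x0"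
  have y'W: "y' \<in> W" using W x0(1) y by (simp add: y'_def vec.subspace_diff vec.subspace_scale)
  have y'o: "sesq G x0 y' = 0" by (simp add: y'_def sesq_diff_right sesq_smult_right x0(2) \<alpha>_def)
  have A0: "sesq A y' x0 = 0"
    using Rayleigh_max_orthogonal[OF G A W x0 max \<mu>' y'W y'o] sesq_hermitian_cnj[OF A, of y' x0] by simp
  have G0: "sesq G y' x0 = 0" using sesq_hermitian_cnj[OF Gh, of y' x0] y'o by simp
  have "y = y' + \<alpha> *s x0" by (simp add: y'_def)
  then show ?thesis by (simp add: sesq_add_left sesq_smult_left A0 G0 \<mu>' x0(2))
qed

lemma orthonormal_list_residual:
  fixes G :: "complex^'n^'n" and vs :: "(complex^'n) list"
  assumes on: "\<And>i l. i < length vs \<Longrightarrow> l < length vs \<Longrightarrow> sesq G (vs!i) (vs!l) = (if i = l then 1 else 0)"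
    and l: "l < length vs"
  shows "sesq G (vs!l) (x - (\<Sum>k<length vs. sesq G (vs!k) x *s vs!k)) = 0"
proof -
  have "(\<Sum>k<length vs. sesq G (vs!k) x * sesq G (vs!l) (vs!k))
      = (\<Sum>k<length vs. if k = l then sesq G (vs!k) x else 0)"
    using l by (intro sum.cong) (auto simp: on)
  then show ?thesis using l by (simp add: sesq_diff_right sesq_sum_right sesq_smult_right)
qed

lemma orthonormal_list_complement_nontrivial:
  fixes G :: "complex^'n^'n" and vs :: "(complex^'n) list"
  assumes on: "\<And>i l. i < length vs \<Longrightarrow> l < length vs \<Longrightarrow> sesq G (vs!i) (vs!l) = (if i = l then 1 else 0)"
    and len: "length vs < CARD('n)"
  shows "{x. \<forall>l<length vs. sesq G (vs!l) x = 0} \<noteq> {0}"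
proof
  assume W0: "{x. \<forall>l<length vs. sesq G (vs!l) x = 0} = {0}"
  have "x \<in> vec.span (set vs)" for x
  proof -
    have "x = (\<Sum>k<length vs. sesq G (vs!k) x *s vs!k)"
    proof -
      have "x - (\<Sum>k<length vs. sesq G (vs!k) x *s vs!k) \<in> {x. \<forall>l<length vs. sesq G (vs!l) x = 0}"
        using orthonormal_list_residual[where G = G and vs = vs, OF on] by simp
      then show ?thesis using W0 by simp
    qed
    also have "\<dots> \<in> vec.span (set vs)" by (intro vec.span_sum vec.span_scale vec.span_base) auto
    finally show ?thesis .
  qed
  then have "vec.dim (UNIV :: (complex^'n) set) \<le> card (set vs)" by (intro vec.dim_le_card) auto
  also have "\<dots> \<le> length vs" by (rule card_length)
  finally show False using len by (simp add: vec_dim_card card_cart_basis)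
qed

lemma gen_eigenvector_orthogonal_to:
  fixes G A :: "complex^'n^'n" and vs :: "(complex^'n) list"
  assumes G: "pos_def_hermitian G" and A: "hermitian_mat A"
    and on: "\<And>i l. i < length vs \<Longrightarrow> l < length vs \<Longrightarrow> sesq G (vs!i) (vs!l) = (if i = l then 1 else 0)"
    and eg: "\<And>i. i < length vs \<Longrightarrow> \<exists>\<mu>::real. A *v vs!i = of_real \<mu> *s (G *v vs!i)"
    and len: "length vs < CARD('n)"
  shows "\<exists>x0 \<mu>. (\<forall>l<length vs. sesq G (vs!l) x0 = 0) \<and> sesq G x0 x0 = 1 \<and>
           A *v x0 = of_real \<mu> *s (G *v x0)"
proof -
  define W where "W = {x. \<forall>l<length vs. sesq G (vs!l) x = 0}"
  have W: "vec.subspace W"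
    by (auto simp: W_def vec.subspace_def sesq_add_right sesq_smult_right)
  obtain x0 where x0: "x0 \<in> W" "sesq G x0 x0 = 1"
    and max: "\<And>z. z \<in> W \<Longrightarrow> Re (sesq A z z) \<le> Re (sesq A x0 x0) * Re (sesq G z z)"
    using Rayleigh_quotient_attains_max[OF G A W]
      orthonormal_list_complement_nontrivial[where G = G and vs = vs, OF on len]
    unfolding W_def by blast
  define \<mu> where "\<mu> = Re (sesq A x0 x0)"
  define z where "z = A *v x0 - of_real \<mu> *s (G *v x0)"
  have cinner_z: "cinner y z = sesq A y x0 - of_real \<mu> * sesq G y x0" for y
    by (simp add: z_def cinner_diff_right cinner_smult_right sesq_eq_cinner)
  have zW: "cinner y z = 0" if "y \<in> W" for y
    using Rayleigh_max_gen_eigen[OF G A W x0 max[folded \<mu>_def] \<mu>_def that] by (simp add: cinner_z)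
  have zv: "cinner (vs!l) z = 0" if l: "l < length vs" for l
  proof -
    have g0: "sesq G (vs!l) x0 = 0" using x0(1) l by (simp add: W_def)
    obtain \<nu> :: real where \<nu>: "A *v vs!l = of_real \<nu> *s (G *v vs!l)" using eg l by auto
    have "sesq A (vs!l) x0 = cnj (of_real \<nu> * sesq G x0 (vs!l))"
      using sesq_hermitian_cnj[OF A, of "vs!l" x0] by (simp add: sesq_eq_cinner \<nu> cinner_smult_right)
    also have "\<dots> = 0"
      using sesq_hermitian_cnj[OF pos_def_hermitian_imp_hermitian[OF G], of x0 "vs!l"] g0 by simp
    finally show ?thesis by (simp add: cinner_z g0)
  qed
  define r where "r = z - (\<Sum>k<length vs. sesq G (vs!k) z *s vs!k)"
  have "r \<in> W" using orthonormal_list_residual[where G = G and vs = vs, OF on] by (simp add: W_def r_def)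
  have "cinner z z = cinner r z + (\<Sum>k<length vs. cnj (sesq G (vs!k) z) * cinner (vs!k) z)"
    by (simp add: r_def cinner_diff_left cinner_sum_left cinner_smult_left)
  also have "\<dots> = 0" using zW[OF \<open>r \<in> W\<close>] zv by simp
  finally have "z = 0" by (simp add: cinner_self_eq_0)
  then show ?thesis
    using x0 by (intro exI[of _ x0] exI[of _ \<mu>]) (auto simp: W_def z_def)
qed

lemma gen_eigenvectors_list:
  fixes G A :: "complex^'n^'n"
  assumes G: "pos_def_hermitian G" and A: "hermitian_mat A"
  shows "k \<le> CARD('n) \<Longrightarrow> \<exists>vs. length vs = k \<and>
     (\<forall>i<k. \<forall>l<k. sesq G (vs!i) (vs!l) = (if i = l then 1 else 0)) \<and>
     (\<forall>i<k. \<exists>\<mu>::real. A *v vs!i = of_real \<mu> *s (G *v vs!i))"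
proof (induction k)
  case 0 then show ?case by simp
next
  case (Suc k)
  then obtain vs where vs: "length vs = k"
    "\<forall>i<k. \<forall>l<k. sesq G (vs!i) (vs!l) = (if i = l then 1 else 0)"
    "\<forall>i<k. \<exists>\<mu>::real. A *v vs!i = of_real \<mu> *s (G *v vs!i)" by auto
  obtain x0 \<mu> where x0: "\<forall>l<length vs. sesq G (vs!l) x0 = 0" "sesq G x0 x0 = 1"
      "A *v x0 = of_real \<mu> *s (G *v x0)"
    using gen_eigenvector_orthogonal_to[OF G A, of vs] vs Suc.prems by auto
  have x0': "\<forall>l<length vs. sesq G x0 (vs!l) = 0"
    using x0(1) sesq_hermitian_cnj[OF pos_def_hermitian_imp_hermitian[OF G], of x0] by simp
  show ?case
  proof (intro exI[of _ "vs @ [x0]"] conjI allI impI)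
    show "length (vs @ [x0]) = Suc k" using vs by simp
  next
    fix i l assume "i < Suc k" "l < Suc k"
    then show "sesq G ((vs @ [x0]) ! i) ((vs @ [x0]) ! l) = (if i = l then 1 else 0)"
      using vs x0 x0' by (auto simp: nth_append less_Suc_eq)
  next
    fix i assume "i < Suc k"
    then show "\<exists>\<mu>::real. A *v (vs @ [x0]) ! i = of_real \<mu> *s (G *v (vs @ [x0]) ! i)"
      using vs x0 by (auto simp: nth_append less_Suc_eq)
  qed
qed

lemma gen_eigenbasis:
  fixes G A :: "complex^'n^'n"
  assumes G: "pos_def_hermitian G" and A: "hermitian_mat A"
  shows "\<exists>u \<mu>. orthonormal_wrt G u \<and> (\<forall>i. A *v u i = of_real (\<mu> i) *s (G *v u i))"
proof -
  obtain vs where vs: "length vs = CARD('n)"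
    "\<forall>i<CARD('n). \<forall>l<CARD('n). sesq G (vs!i) (vs!l) = (if i = l then 1 else 0)"
    "\<forall>i<CARD('n). \<exists>\<mu>::real. A *v vs!i = of_real \<mu> *s (G *v vs!i)"
    using gen_eigenvectors_list[OF G A, of "CARD('n)"] by auto
  obtain e :: "'n \<Rightarrow> nat" where e: "bij_betw e UNIV {0..<CARD('n)}"
    using ex_bij_betw_finite_nat[of "UNIV :: 'n set"] by auto
  have elt: "e i < CARD('n)" for i using e by (auto simp: bij_betw_def)
  have einj: "e i = e k \<longleftrightarrow> i = k" for i k using e by (auto simp: bij_betw_def inj_def)
  obtain mu where mu: "\<forall>i<CARD('n). A *v vs!i = of_real (mu i) *s (G *v vs!i)"
    using vs(3) by metis
  show ?thesis
  proof (intro exI conjI allI)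
    show "orthonormal_wrt G (\<lambda>i. vs ! e i)" using vs(2) elt einj by (simp add: orthonormal_wrt_def)
  next
    fix i show "A *v vs ! e i = of_real (mu (e i)) *s (G *v vs ! e i)" using mu elt by simp
  qed
qed

lemma pos_def_hermitian_mat_1: "pos_def_hermitian (mat 1 :: complex^'n^'n)"
proof -
  have h: "hermitian_mat (mat 1 :: complex^'n^'n)"
    by (simp add: hermitian_mat_def conj_transpose_def mat_def vec_eq_iff)
  have "herm_form x (mat 1) = of_real ((norm x)^2)" for x :: "complex^'n"
    by (simp add: herm_form_eq_sesq sesq_mat_1 cinner_self_norm)
  then show ?thesis using h by (simp add: pos_def_hermitian_def)
qed

lemma mat_1_in_HH: "(mat 1 :: complex^'n^'n) \<in> HH"
  by (simp add: HH_def pos_def_hermitian_mat_1)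

lemma cinner_mat_left: "hermitian_mat G \<Longrightarrow> cinner (G *v u) x = sesq G u x"
  by (simp add: sesq_eq_cinner cinner_hermitian_mat)

lemma herm_form_frame_mat_mult:
  assumes G: "pos_def_hermitian G"
  shows "herm_form x (frame_mat (\<lambda>i. G *v u i) \<mu>) = of_real (\<Sum>i\<in>UNIV. \<mu> i * (cmod (sesq G (u i) x))^2)"
  by (simp add: herm_form_frame_mat cinner_mat_left[OF pos_def_hermitian_imp_hermitian[OF G]])

lemma frame_mat_mult_one:
  assumes G: "pos_def_hermitian G" and u: "orthonormal_wrt G u"
  shows "frame_mat (\<lambda>i. G *v u i) (\<lambda>_. 1) = G"
proof (rule mat_eq_if_sesq_diag_eq)
  fix x
  have e: "\<And>i. G *v u i = of_real 1 *s (G *v u i)" by simp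
  show "sesq (frame_mat (\<lambda>i. G *v u i) (\<lambda>_. 1)) x x = sesq G x x"
    using herm_form_frame_mat_mult[OF G, of x u "\<lambda>_. 1"] sesq_self_gen_eigenbasis[OF G u e, of x]
    by (simp add: herm_form_eq_sesq)
qed

lemma det_frame_mat_mult:
  assumes G: "pos_def_hermitian G" and u: "orthonormal_wrt G u"
  shows "det (frame_mat (\<lambda>i. G *v u i) \<mu>) = of_real (\<Prod>i\<in>UNIV. \<mu> i) * det G"
proof -
  have "det G = of_real ((cmod (det (frame_cols (\<lambda>i. G *v u i))))^2)"
    using det_frame_mat[of "\<lambda>i. G *v u i" "\<lambda>_. 1"] frame_mat_mult_one[OF G u] by simp
  then show ?thesis by (simp add: det_frame_mat)
qed

lemma frame_mat_mult_in_HH: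
  fixes G :: "complex^'n^'n"
  assumes G: "pos_def_hermitian G" and u: "orthonormal_wrt G u" and dG: "det G = 1"
    and pos: "\<And>i. \<mu> i > 0" and pr: "(\<Prod>i\<in>UNIV. \<mu> i) = 1"
  shows "frame_mat (\<lambda>i. G *v u i) \<mu> \<in> HH"
proof -
  have pd: "pos_def_hermitian (frame_mat (\<lambda>i. G *v u i) \<mu>)"
    unfolding pos_def_hermitian_def
  proof (intro conjI allI impI)
    show "hermitian_mat (frame_mat (\<lambda>i. G *v u i) \<mu>)" by (rule hermitian_frame_mat)
  next
    fix x :: "complex^'n" assume x: "x \<noteq> 0"
    show "Im (herm_form x (frame_mat (\<lambda>i. G *v u i) \<mu>)) = 0"
      by (simp add: herm_form_frame_mat_mult[OF G])
    obtain i where i: "sesq G (u i) x \<noteq> 0" using orthonormal_coord_nonzero[OF G u x] by blast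
    have "0 < \<mu> i * (cmod (sesq G (u i) x))^2" using i pos[of i] by simp
    also have "\<dots> \<le> (\<Sum>i\<in>UNIV. \<mu> i * (cmod (sesq G (u i) x))^2)"
      by (rule member_le_sum) (auto intro: mult_nonneg_nonneg less_imp_le[OF pos])
    finally show "Re (herm_form x (frame_mat (\<lambda>i. G *v u i) \<mu>)) > 0"
      by (simp add: herm_form_frame_mat_mult[OF G])
  qed
  have "det (frame_mat (\<lambda>i. G *v u i) \<mu>) = 1" by (simp add: det_frame_mat_mult[OF G u] pr dG)
  then show ?thesis using pd by (simp add: HH_def)
qed

lemma HH_decomposition:
  assumes G: "pos_def_hermitian G" and dG: "det G = 1" and Q: "Q \<in> HH"
  obtains u \<nu> where "orthonormal_wrt G u" "(\<Sum>i\<in>UNIV. \<nu> i) = 0"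
    "Q = frame_mat (\<lambda>i. G *v u i) (\<lambda>i. exp (\<nu> i))"
proof -
  have Qp: "pos_def_hermitian Q" and dQ: "det Q = 1" using Q by (auto simp: HH_def)
  obtain u \<mu> where u: "orthonormal_wrt G u" and e: "\<And>i. Q *v u i = of_real (\<mu> i) *s (G *v u i)"
    using gen_eigenbasis[OF G pos_def_hermitian_imp_hermitian[OF Qp]] by blast
  have Qeq: "Q = frame_mat (\<lambda>i. G *v u i) \<mu>"
  proof (rule mat_eq_if_sesq_diag_eq)
    fix x show "sesq Q x x = sesq (frame_mat (\<lambda>i. G *v u i) \<mu>) x x"
      using herm_form_frame_mat_mult[OF G, of x u \<mu>] sesq_self_gen_eigenbasis[OF G u e, of x]
      by (simp add: herm_form_eq_sesq)
  qed
  have pos: "\<mu> i > 0" for i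
  proof -
    have "sesq G (u i) (u i) = 1" using u by (simp add: orthonormal_wrt_def)
    then have "u i \<noteq> 0" by auto
    then have "Re (sesq Q (u i) (u i)) > 0" by (rule pos_def_sesq_pos[OF Qp])
    then show ?thesis using sesq_gen_eigenvectors[OF e u, of i i] by simp
  qed
  have "complex_of_real (\<Prod>i\<in>UNIV. \<mu> i) = complex_of_real 1"
    using det_frame_mat_mult[OF G u, of \<mu>] Qeq dQ dG by simp
  then have "(\<Prod>i\<in>UNIV. \<mu> i) = 1" by (simp only: of_real_eq_iff)
  then have "(\<Sum>i\<in>UNIV. ln (\<mu> i)) = 0" using pos by (simp add: ln_prod[symmetric] less_imp_neq[symmetric])
  moreover have "Q = frame_mat (\<lambda>i. G *v u i) (\<lambda>i. exp (ln (\<mu> i)))" using Qeq pos by simp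
  ultimately show thesis using that u by blast
qed

lemma DD_on_HH: "Q \<in> HH \<Longrightarrow> DD m P Q = (\<Sum>j<m. ln (Re (herm_form (P j) Q)))"
  by (simp add: DD_def HH_def)

lemma DD_frame_mat_mult:
  assumes G: "pos_def_hermitian G" and u: "orthonormal_wrt G u" and dG: "det G = 1"
    and pos: "\<And>i. \<mu> i > 0" and pr: "(\<Prod>i\<in>UNIV. \<mu> i) = 1"
  shows "DD m P (frame_mat (\<lambda>i. G *v u i) \<mu>) = (\<Sum>j<m. ln (\<Sum>i\<in>UNIV. \<mu> i * (cmod (sesq G (u i) (P j)))^2))"
  using frame_mat_mult_in_HH[OF G u dG pos pr] by (simp add: DD_on_HH herm_form_frame_mat_mult[OF G])

lemma bounded_linear_Re_herm_form: "bounded_linear (\<lambda>Q. Re (herm_form x Q))"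
  unfolding herm_form_def
  by (intro bounded_linear_intros bounded_linear_compose[OF bounded_linear_Re]  bounded_linear_compose[OF bounded_linear_vec_nth bounded_linear_vec_nth])

lemma Re_herm_form_curve_has_derivative:
  assumes "\<gamma> differentiable (at 0)"
  shows "\<exists>c. ((\<lambda>t. Re (herm_form x (\<gamma> t))) has_real_derivative c) (at 0)"
proof -
  obtain D where "(\<gamma> has_derivative D) (at 0)" using assms by (auto simp: differentiable_def)
  then have "((\<lambda>t. Re (herm_form x (\<gamma> t))) has_derivative (\<lambda>h. Re (herm_form x (D h)))) (at 0)"
    by (rule bounded_linear.has_derivative[OF bounded_linear_Re_herm_form])
  then have "(\<lambda>t. Re (herm_form x (\<gamma> t))) differentiable (at 0)" by (rule differentiableI)
  then show ?thesis by (simp add: real_differentiable_def)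
qed

lemma HH_herm_form_pos: "Q \<in> HH \<Longrightarrow> x \<noteq> 0 \<Longrightarrow> Re (herm_form x Q) > 0"
  by (simp add: HH_def pos_def_hermitian_def)

lemma DD_curve_has_derivative:
  assumes g: "\<forall>t. \<gamma> t \<in> HH" and d: "\<gamma> differentiable (at 0)" and nz: "\<forall>j<m. P j \<noteq> 0"
  shows "\<exists>l. ((\<lambda>t. DD m P (\<gamma> t)) has_real_derivative l) (at 0)"
proof -
  have "\<forall>j. \<exists>c. ((\<lambda>t. Re (herm_form (P j) (\<gamma> t))) has_real_derivative c) (at 0)"
    using Re_herm_form_curve_has_derivative[OF d] by blast
  then obtain c where c: "\<And>j. ((\<lambda>t. Re (herm_form (P j) (\<gamma> t))) has_real_derivative c j) (at 0)"
    by metis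
  have f: "(\<lambda>t. DD m P (\<gamma> t)) = (\<lambda>t. \<Sum>j<m. ln (Re (herm_form (P j) (\<gamma> t))))"
    using g by (simp add: DD_on_HH)
  have "((\<lambda>t. \<Sum>j<m. ln (Re (herm_form (P j) (\<gamma> t)))) has_real_derivative
        (\<Sum>j<m. 1 / Re (herm_form (P j) (\<gamma> 0)) * c j)) (at 0)"
  proof (rule DERIV_sum)
    fix j assume j: "j \<in> {..<m}"
    have pos: "Re (herm_form (P j) (\<gamma> 0)) > 0" using HH_herm_form_pos[OF g[rule_format, of 0]] nz j by simp
    show "((\<lambda>t. ln (Re (herm_form (P j) (\<gamma> t)))) has_real_derivative
        1 / Re (herm_form (P j) (\<gamma> 0)) * c j) (at 0)"
      by (rule DERIV_chain2[OF DERIV_ln_divide[OF pos] c])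
  qed
  then show ?thesis unfolding f by blast
qed

lemma critical_if_minimum:
  assumes Q0: "Q0 \<in> HH" and min: "\<forall>Q\<in>HH. DD m P Q0 \<le> DD m P Q" and nz: "\<forall>j<m. P j \<noteq> 0"
  shows "critical_on_HH m P Q0"
  unfolding critical_on_HH_def
proof (intro conjI allI impI)
  show "Q0 \<in> HH" by fact
  fix \<gamma> :: "real \<Rightarrow> complex^'a^'a"
  assume h: "(\<forall>t. \<gamma> t \<in> HH) \<and> \<gamma> 0 = Q0 \<and> \<gamma> differentiable at 0"
  obtain l where l: "((\<lambda>t. DD m P (\<gamma> t)) has_real_derivative l) (at 0)"
    using DD_curve_has_derivative[of \<gamma> m P] h nz by blast
  have "l = 0"
    by (rule DERIV_local_min[OF l, of 1]) (use h min in auto)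
  then show "((\<lambda>t. DD m P (\<gamma> t)) has_real_derivative 0) (at 0)" using l by simp
qed

section \<open>Uniqueness of the critical point\<close>

lemma diff_mult_exp_diff_nonneg: "(x - y) * (exp x - exp y) \<ge> (0::real)"
  by (cases "x \<le> y") (auto intro: mult_nonpos_nonpos mult_nonneg_nonneg)

lemma diff_mult_exp_diff_eq_0: "(x - y) * (exp x - exp y) = (0::real) \<Longrightarrow> x = y"
  by (metis eq_iff_diff_eq_0 exp_inj_iff mult_eq_0_iff)

text \<open>Symmetrization: the difference of the two weighted means of \<open>\<nu>\<close> is a double sum of
  nonnegative terms.\<close>

lemma exp_tilted_mean_diff:
  fixes a \<nu> :: "'n::finite \<Rightarrow> real"
  assumes SA: "(\<Sum>i\<in>UNIV. a i) \<noteq> 0" and SB: "(\<Sum>i\<in>UNIV. exp (\<nu> i) * a i) \<noteq> 0"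
  shows "(\<Sum>i\<in>UNIV. \<nu> i * exp (\<nu> i) * a i) / (\<Sum>i\<in>UNIV. exp (\<nu> i) * a i)
           - (\<Sum>i\<in>UNIV. \<nu> i * a i) / (\<Sum>i\<in>UNIV. a i)
         = (\<Sum>i\<in>UNIV. \<Sum>k\<in>UNIV. a i * a k * ((\<nu> i - \<nu> k) * (exp (\<nu> i) - exp (\<nu> k))))
           / (2 * (\<Sum>i\<in>UNIV. a i) * (\<Sum>i\<in>UNIV. exp (\<nu> i) * a i))"
proof -
  define t where "t i k = a i * a k * (\<nu> i * (exp (\<nu> i) - exp (\<nu> k)))" for i k
  have "(\<Sum>i\<in>UNIV. \<Sum>k\<in>UNIV. t i k)
      = (\<Sum>i\<in>UNIV. \<nu> i * exp (\<nu> i) * a i) * (\<Sum>i\<in>UNIV. a i)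
        - (\<Sum>i\<in>UNIV. \<nu> i * a i) * (\<Sum>i\<in>UNIV. exp (\<nu> i) * a i)"
  proof -
    have "(\<Sum>i\<in>UNIV. \<Sum>k\<in>UNIV. t i k) = (\<Sum>i\<in>UNIV. \<Sum>k\<in>UNIV.
        (\<nu> i * exp (\<nu> i) * a i) * a k - (\<nu> i * a i) * (exp (\<nu> k) * a k))"
      unfolding t_def by (intro sum.cong refl) (simp add: algebra_simps)
    also have "\<dots> = (\<Sum>i\<in>UNIV. (\<nu> i * exp (\<nu> i) * a i) * (\<Sum>i\<in>UNIV. a i)
        - (\<nu> i * a i) * (\<Sum>i\<in>UNIV. exp (\<nu> i) * a i))"
      by (simp add: sum_subtractf sum_distrib_left)
    finally show ?thesis by (simp add: sum_subtractf sum_distrib_right)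
  qed
  moreover have "(\<Sum>i\<in>UNIV. \<Sum>k\<in>UNIV. a i * a k * ((\<nu> i - \<nu> k) * (exp (\<nu> i) - exp (\<nu> k))))
      = (\<Sum>i\<in>UNIV. \<Sum>k\<in>UNIV. t i k) + (\<Sum>i\<in>UNIV. \<Sum>k\<in>UNIV. t k i)"
    by (simp add: t_def sum.distrib[symmetric] algebra_simps)
  moreover have "(\<Sum>i\<in>UNIV. \<Sum>k\<in>UNIV. t k i) = (\<Sum>i\<in>UNIV. \<Sum>k\<in>UNIV. t i k)"
    by (rule sum.swap)
  ultimately show ?thesis using SA SB by (simp add: field_simps)
qed

lemma exp_tilted_mean_mono:
  fixes a \<nu> :: "'n::finite \<Rightarrow> real"
  assumes a: "\<And>i. a i \<ge> 0" and A: "(\<Sum>i\<in>UNIV. a i) > 0"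
  shows "(\<Sum>i\<in>UNIV. \<nu> i * a i) / (\<Sum>i\<in>UNIV. a i) \<le>
           (\<Sum>i\<in>UNIV. \<nu> i * exp (\<nu> i) * a i) / (\<Sum>i\<in>UNIV. exp (\<nu> i) * a i)"
    and "(\<Sum>i\<in>UNIV. \<nu> i * a i) / (\<Sum>i\<in>UNIV. a i) =
           (\<Sum>i\<in>UNIV. \<nu> i * exp (\<nu> i) * a i) / (\<Sum>i\<in>UNIV. exp (\<nu> i) * a i)
         \<Longrightarrow> a i > 0 \<Longrightarrow> a k > 0 \<Longrightarrow> \<nu> i = \<nu> k"
proof -
  obtain i0 where "a i0 > 0" using A sum_nonpos[of UNIV a] by (metis not_le)
  then have "0 < exp (\<nu> i0) * a i0" by simp
  also have "\<dots> \<le> (\<Sum>i\<in>UNIV. exp (\<nu> i) * a i)" by (rule member_le_sum) (simp_all add: a)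
  finally have SB: "(\<Sum>i\<in>UNIV. exp (\<nu> i) * a i) > 0" .
  have terms: "a i * a k * ((\<nu> i - \<nu> k) * (exp (\<nu> i) - exp (\<nu> k))) \<ge> 0" for i k
    by (intro mult_nonneg_nonneg a diff_mult_exp_diff_nonneg)
  note diff = exp_tilted_mean_diff[OF _ _, of a \<nu>]
  show "(\<Sum>i\<in>UNIV. \<nu> i * a i) / (\<Sum>i\<in>UNIV. a i) \<le>
           (\<Sum>i\<in>UNIV. \<nu> i * exp (\<nu> i) * a i) / (\<Sum>i\<in>UNIV. exp (\<nu> i) * a i)"
    using diff A SB by (smt (verit) divide_nonneg_pos mult_pos_pos sum_nonneg terms)
  assume eq: "(\<Sum>i\<in>UNIV. \<nu> i * a i) / (\<Sum>i\<in>UNIV. a i) =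
           (\<Sum>i\<in>UNIV. \<nu> i * exp (\<nu> i) * a i) / (\<Sum>i\<in>UNIV. exp (\<nu> i) * a i)"
    and ai: "a i > 0" and ak: "a k > 0"
  have "(\<Sum>i\<in>UNIV. \<Sum>k\<in>UNIV. a i * a k * ((\<nu> i - \<nu> k) * (exp (\<nu> i) - exp (\<nu> k)))) = 0"
    using diff eq A SB by simp
  then have "a i * a k * ((\<nu> i - \<nu> k) * (exp (\<nu> i) - exp (\<nu> k))) = 0"
    by (subst (asm) sum_nonneg_eq_0_iff) (auto simp: sum_nonneg_eq_0_iff sum_nonneg terms)
  then show "\<nu> i = \<nu> k" using ai ak by (auto dest: diff_mult_exp_diff_eq_0)
qed

definition coord_weight :: "complex^'n^'n \<Rightarrow> ('n \<Rightarrow> complex^'n) \<Rightarrow> complex^'n \<Rightarrow> 'n \<Rightarrow> real" where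
  "coord_weight G u x i = (cmod (sesq G (u i) x))^2"

lemma coord_weight_nonneg: "coord_weight G u x i \<ge> 0" by (simp add: coord_weight_def)

lemma coord_weight_pos_ex:
  assumes G: "pos_def_hermitian G" and u: "orthonormal_wrt G u" and x: "x \<noteq> 0"
  shows "\<exists>i. coord_weight G u x i > 0"
  using orthonormal_coord_nonzero[OF G u x] by (auto simp: coord_weight_def)

lemma weighted_coord_weight_sum_pos:
  assumes G: "pos_def_hermitian G" and u: "orthonormal_wrt G u" and x: "x \<noteq> 0"
    and pos: "\<And>i. f i > (0::real)"
  shows "(\<Sum>i\<in>UNIV. f i * coord_weight G u x i) > 0"
proof -
  obtain i where i: "coord_weight G u x i > 0" using coord_weight_pos_ex[OF G u x] by blast
  have "0 < f i * coord_weight G u x i" using i pos[of i] by simp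
  also have "\<dots> \<le> (\<Sum>i\<in>UNIV. f i * coord_weight G u x i)"
    by (rule member_le_sum) (auto intro: mult_nonneg_nonneg less_imp_le[OF pos] coord_weight_nonneg)
  finally show ?thesis .
qed

definition coord_support :: "complex^'n^'n \<Rightarrow> ('n \<Rightarrow> complex^'n) \<Rightarrow> complex^'n \<Rightarrow> 'n set" where
  "coord_support G u x = {i. sesq G (u i) x \<noteq> 0}"

lemma coord_weight_pos_iff: "coord_weight G u x i > 0 \<longleftrightarrow> i \<in> coord_support G u x"
  by (simp add: coord_weight_def coord_support_def)

lemma in_span_if_coords_vanish:
  assumes G: "pos_def_hermitian G" and u: "orthonormal_wrt G u"
    and z: "\<And>i. i \<notin> S \<Longrightarrow> sesq G (u i) x = 0"
  shows "x \<in> vec.span (u ` S)"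
proof -
  have "x = (\<Sum>i\<in>UNIV. sesq G (u i) x *s u i)" by (rule orthonormal_expansion[OF G u])
  also have "\<dots> = (\<Sum>i\<in>S. sesq G (u i) x *s u i)"
    by (rule sum.mono_neutral_right) (auto simp: z)
  also have "\<dots> \<in> vec.span (u ` S)"
    by (intro vec.span_sum vec.span_scale vec.span_base) auto
  finally show ?thesis .
qed

lemma coord_zero_if_in_span:
  assumes x: "x \<in> vec.span (u ` S)" and u: "orthonormal_wrt G u" and i: "i \<notin> S"
  shows "sesq G (u i) x = 0"
proof -
  have "subspace_ok": "vec.subspace (Collect (\<lambda>y. sesq G (u i) y = 0))"
    by (rule vec.subspaceI) (auto simp: sesq_add_right sesq_smult_right)
  have gen: "\<And>y. y \<in> u ` S \<Longrightarrow> sesq G (u i) y = 0"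
  proof -
    fix y assume "y \<in> u ` S"
    then obtain k where "y = u k" "k \<in> S" by blast
    then show "sesq G (u i) y = 0" using u i by (auto simp: orthonormal_wrt_def)
  qed
  show ?thesis using vec.span_induct[OF x subspace_ok gen] by simp
qed

lemma independent_range_orthonormal:
  assumes G: "pos_def_hermitian G" and u: "orthonormal_wrt G u"
  shows "vec.independent (range u)"
proof (rule independent_if_orthogonal_wrt[OF G])
  fix v assume "v \<in> range u"
  then obtain i where "v = u i" by blast
  then show "sesq G v v \<noteq> 0" using u by (simp add: orthonormal_wrt_def)
next
  fix v w assume "v \<in> range u" "w \<in> range u" "v \<noteq> w"
  then obtain i k where "v = u i" "w = u k" "i \<noteq> k" by blast
  then show "sesq G v w = 0" using u by (simp add: orthonormal_wrt_def)
qed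

lemma dim_span_orthonormal:
  assumes G: "pos_def_hermitian G" and u: "orthonormal_wrt G u"
  shows "vec.dim (vec.span (u ` S)) = card S"
proof -
  have "vec.independent (u ` S)"
    by (rule vec.independent_mono[OF independent_range_orthonormal[OF G u]]) auto
  then have "vec.dim (vec.span (u ` S)) = card (u ` S)" by (rule vec.dim_span_eq_card_independent)
  also have "\<dots> = card S" using orthonormal_wrt_inj[OF u] by (simp add: card_image inj_on_subset)
  finally show ?thesis .
qed

lemma orthonormal_wrt_nonzero: "orthonormal_wrt G u \<Longrightarrow> u i \<noteq> 0"
proof
  assume a: "orthonormal_wrt G u" "u i = 0"
  have "sesq G (u i) (u i) = 1" using a(1) by (simp add: orthonormal_wrt_def)
  then show False using a(2) by simp
qed

lemma span_orthonormal_proper_subspace: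
  fixes u :: "'n \<Rightarrow> complex^'n"
  assumes G: "pos_def_hermitian G" and u: "orthonormal_wrt G u" and i0: "i0 \<in> S" and i1: "i1 \<notin> S"
  shows "vec.subspace (vec.span (u ` S)) \<and> vec.span (u ` S) \<noteq> {0} \<and> vec.span (u ` S) \<noteq> UNIV"
proof (intro conjI)
  show "vec.subspace (vec.span (u ` S))" by (rule vec.subspace_span)
  show "vec.span (u ` S) \<noteq> {0}"
    using vec.span_base[of "u i0" "u ` S"] i0 orthonormal_wrt_nonzero[OF u, of i0] by auto
  show "vec.span (u ` S) \<noteq> UNIV"
  proof
    assume "vec.span (u ` S) = UNIV"
    then have "card S = CARD('n)" using dim_span_orthonormal[OF G u, of S] vec_dim_card[where 'a=complex and 'n='n]
      by simp
    moreover have "card S < CARD('n)" using i1 by (intro psubset_card_mono) auto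
    ultimately show False by simp
  qed
qed

lemma coord_support_nonempty:
  assumes G: "pos_def_hermitian G" and u: "orthonormal_wrt G u" and x: "x \<noteq> 0"
  shows "coord_support G u x \<noteq> {}"
  using orthonormal_coord_nonzero[OF G u x] by (auto simp: coord_support_def)

lemma coord_support_disjoint_iff:
  assumes G: "pos_def_hermitian G" and u: "orthonormal_wrt G u"
  shows "coord_support G u x \<inter> T = {} \<longleftrightarrow> x \<in> vec.span (u ` (- T))"
proof
  assume h: "coord_support G u x \<inter> T = {}"
  show "x \<in> vec.span (u ` (- T))"
    by (rule in_span_if_coords_vanish[OF G u]) (use h in \<open>auto simp: coord_support_def\<close>)
next
  assume h: "x \<in> vec.span (u ` (- T))"
  have "sesq G (u i) x = 0" if "i \<in> T" for i
    by (rule coord_zero_if_in_span[OF h u]) (use that in auto)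
  then show "coord_support G u x \<inter> T = {}" by (auto simp: coord_support_def)
qed

definition stability_margin :: "complex^'n^'n \<Rightarrow> ('n \<Rightarrow> complex^'n) \<Rightarrow> (nat \<Rightarrow> complex^'n) \<Rightarrow> nat \<Rightarrow> 'n set \<Rightarrow> real" where
  "stability_margin G u P m T = real m * real (card (- T)) / real CARD('n)
      - real (card {j. j < m \<and> P j \<in> vec.span (u ` (- T))})"

definition min_stability_margin :: "complex^'n^'n \<Rightarrow> ('n \<Rightarrow> complex^'n) \<Rightarrow> (nat \<Rightarrow> complex^'n) \<Rightarrow> nat \<Rightarrow> real" where
  "min_stability_margin G u P m = Min (insert 1 (stability_margin G u P m ` {T. T \<noteq> {} \<and> T \<noteq> UNIV}))"

lemma stability_margin_pos:
  fixes P :: "nat \<Rightarrow> complex^'n"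
  assumes G: "pos_def_hermitian G" and u: "orthonormal_wrt G u" and stable: "stable_cluster m P"
    and T: "T \<noteq> {}" "T \<noteq> UNIV"
  shows "stability_margin G u P m T > 0"
proof -
  obtain i0 where i0: "i0 \<in> - T" using T(2) by blast
  obtain i1 where i1: "i1 \<in> T" using T(1) by blast
  have p: "vec.subspace (vec.span (u ` (- T))) \<and> vec.span (u ` (- T)) \<noteq> {0} \<and> vec.span (u ` (- T)) \<noteq> UNIV"
    by (rule span_orthonormal_proper_subspace[OF G u i0]) (use i1 in auto)
  have "CARD('n) * card {j. j < m \<and> P j \<in> vec.span (u ` (- T))} < vec.dim (vec.span (u ` (- T))) * m"
    using stable p unfolding stable_cluster_def by blast
  then have "CARD('n) * card {j. j < m \<and> P j \<in> vec.span (u ` (- T))} < card (- T) * m"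
    unfolding dim_span_orthonormal[OF G u] .
  then have "real CARD('n) * real (card {j. j < m \<and> P j \<in> vec.span (u ` (- T))}) < real (card (- T)) * real m"
    by (simp only: of_nat_mult[symmetric] of_nat_less_iff)
  then show ?thesis
    by (simp add: stability_margin_def field_simps)
qed

lemma min_stability_margin:
  fixes P :: "nat \<Rightarrow> complex^'n"
  assumes G: "pos_def_hermitian G" and u: "orthonormal_wrt G u" and stable: "stable_cluster m P"
  shows "min_stability_margin G u P m > 0" and "\<And>T. T \<noteq> {} \<Longrightarrow> T \<noteq> UNIV \<Longrightarrow> min_stability_margin G u P m \<le> stability_margin G u P m T"
proof -
  have fin: "finite (insert 1 (stability_margin G u P m ` {T. T \<noteq> {} \<and> T \<noteq> UNIV}))" by simp
  show "min_stability_margin G u P m > 0"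
    unfolding min_stability_margin_def using stability_margin_pos[OF G u stable] fin
    by (subst Min_gr_iff) auto
  fix T :: "'n set" assume "T \<noteq> {}" "T \<noteq> UNIV"
  then show "min_stability_margin G u P m \<le> stability_margin G u P m T"
    unfolding min_stability_margin_def using fin by (intro Min_le) auto
qed

lemma DD_geodesic_has_derivative:
  fixes G :: "complex^'n^'n" and s :: real and \<nu> :: "'n \<Rightarrow> real"
  assumes G: "pos_def_hermitian G" and u: "orthonormal_wrt G u" and dG: "det G = 1"
    and s0: "(\<Sum>i\<in>UNIV. \<nu> i) = 0" and nz: "\<forall>j<m. P j \<noteq> 0"
  defines "\<gamma> \<equiv> \<lambda>t. frame_mat (\<lambda>i. G *v u i) (\<lambda>i. exp ((s + t) * \<nu> i))"
  shows "(\<forall>t. \<gamma> t \<in> HH) \<and> \<gamma> differentiable (at 0) \<and>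
    ((\<lambda>t. DD m P (\<gamma> t)) has_real_derivative
      (\<Sum>j<m. (\<Sum>i\<in>UNIV. \<nu> i * exp (s * \<nu> i) * coord_weight G u (P j) i) /
               (\<Sum>i\<in>UNIV. exp (s * \<nu> i) * coord_weight G u (P j) i))) (at 0)"
proof (intro conjI)
  have pr: "(\<Prod>i\<in>UNIV. exp ((s + t) * \<nu> i)) = 1" for t
    using s0 by (simp add: exp_sum[symmetric] sum_distrib_left[symmetric])
  show hh: "\<forall>t. \<gamma> t \<in> HH"
    using frame_mat_mult_in_HH[OF G u dG _ pr] by (simp add: \<gamma>_def)
  have ed: "((\<lambda>t. exp ((s + t) * \<nu> i)) has_real_derivative exp (s * \<nu> i) * \<nu> i) (at 0)" for i
    by (auto intro!: derivative_eq_intros)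
  show "\<gamma> differentiable (at 0)"
    unfolding \<gamma>_def frame_mat_def
    using ed by (intro differentiable_sum ballI differentiable_scaleR differentiable_const)
       (auto simp: real_differentiable_def)
  have f: "(\<lambda>t. DD m P (\<gamma> t)) = (\<lambda>t. \<Sum>j<m. ln (\<Sum>i\<in>UNIV. exp ((s + t) * \<nu> i) * coord_weight G u (P j) i))"
    using DD_frame_mat_mult[OF G u dG _ pr] by (simp add: \<gamma>_def coord_weight_def)
  show "((\<lambda>t. DD m P (\<gamma> t)) has_real_derivative
      (\<Sum>j<m. (\<Sum>i\<in>UNIV. \<nu> i * exp (s * \<nu> i) * coord_weight G u (P j) i) /
               (\<Sum>i\<in>UNIV. exp (s * \<nu> i) * coord_weight G u (P j) i))) (at 0)"
    unfolding f
  proof (rule DERIV_sum)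
    fix j assume j: "j \<in> {..<m}"
    have pos: "(\<Sum>i\<in>UNIV. exp (s * \<nu> i) * coord_weight G u (P j) i) > 0"
      using weighted_coord_weight_sum_pos[OF G u, of "P j"] nz j by simp
    have inner: "((\<lambda>t. \<Sum>i\<in>UNIV. exp ((s + t) * \<nu> i) * coord_weight G u (P j) i) has_real_derivative
        (\<Sum>i\<in>UNIV. \<nu> i * exp (s * \<nu> i) * coord_weight G u (P j) i)) (at 0)"
      by (rule DERIV_sum, rule DERIV_cong[OF DERIV_cmult_right[OF ed]]) (simp add: mult_ac)
    show "((\<lambda>t. ln (\<Sum>i\<in>UNIV. exp ((s + t) * \<nu> i) * coord_weight G u (P j) i)) has_real_derivative
        (\<Sum>i\<in>UNIV. \<nu> i * exp (s * \<nu> i) * coord_weight G u (P j) i) /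
               (\<Sum>i\<in>UNIV. exp (s * \<nu> i) * coord_weight G u (P j) i)) (at 0)"
      using DERIV_chain2[OF DERIV_ln_divide inner] pos by simp
  qed
qed

lemma stable_constant_on_supports:
  fixes P :: "nat \<Rightarrow> complex^'n" and \<nu> :: "'n \<Rightarrow> real"
  assumes G: "pos_def_hermitian G" and u: "orthonormal_wrt G u" and stable: "stable_cluster m P"
    and nz: "\<forall>j<m. P j \<noteq> 0"
    and const: "\<And>j i k. j < m \<Longrightarrow> i \<in> coord_support G u (P j) \<Longrightarrow> k \<in> coord_support G u (P j)
        \<Longrightarrow> \<nu> i = \<nu> k"
  shows "\<nu> i = \<nu> k"
proof (rule ccontr)
  assume ne: "\<nu> i \<noteq> \<nu> k"
  define T where "T = {l. \<nu> l = \<nu> i}"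
  have "i \<in> T" "k \<notin> T" using ne by (auto simp: T_def)
  then have T: "T \<noteq> {}" "T \<noteq> UNIV" "- T \<noteq> {}" "- T \<noteq> UNIV" by auto
  define A1 where "A1 = {j. j < m \<and> P j \<in> vec.span (u ` T)}"
  define A2 where "A2 = {j. j < m \<and> P j \<in> vec.span (u ` (- T))}"
  have "{..<m} \<subseteq> A1 \<union> A2"
  proof
    fix j assume "j \<in> {..<m}"
    then have j: "j < m" by simp
    obtain l where l: "l \<in> coord_support G u (P j)"
      using coord_support_nonempty[OF G u] nz j by blast
    show "j \<in> A1 \<union> A2"
    proof (cases "l \<in> T")
      case True
      then have "coord_support G u (P j) \<inter> - T = {}" using const[OF j l] by (auto simp: T_def)
      then have "P j \<in> vec.span (u ` T)" using coord_support_disjoint_iff[OF G u, of "P j" "- T"] by simp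
      then show ?thesis using j by (simp add: A1_def)
    next
      case False
      then have "coord_support G u (P j) \<inter> T = {}" using const[OF j l] by (auto simp: T_def)
      then have "P j \<in> vec.span (u ` (- T))" using coord_support_disjoint_iff[OF G u, of "P j" T] by simp
      then show ?thesis using j by (simp add: A2_def)
    qed
  qed
  then have "m \<le> card (A1 \<union> A2)"
    using card_mono[of "A1 \<union> A2" "{..<m}"] by (simp add: A1_def A2_def)
  also have "\<dots> \<le> card A1 + card A2" by (rule card_Un_le)
  finally have "m \<le> card A1 + card A2" .
  moreover have "stability_margin G u P m T + stability_margin G u P m (- T) = real m - real (card A2 + card A1)"
  proof -
    have "real (card (- T)) + real (card T) = real CARD('n)"
      using card_Un_disjoint[of "- T" T] by (simp flip: of_nat_add)
    then have "real m * real (card (- T)) / real CARD('n) + real m * real (card T) / real CARD('n) = real m"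
      by (simp flip: add_divide_distrib distrib_left)
    then show ?thesis by (simp add: stability_margin_def A1_def A2_def)
  qed
  moreover have "stability_margin G u P m T > 0" "stability_margin G u P m (- T) > 0"
    using stability_margin_pos[OF G u stable] T by auto
  ultimately show False by linarith
qed

lemma DD_geodesic_slope_critical:
  fixes G :: "complex^'n^'n" and s :: real and \<nu> :: "'n \<Rightarrow> real"
  assumes G: "pos_def_hermitian G" and u: "orthonormal_wrt G u" and dG: "det G = 1"
    and s0: "(\<Sum>i\<in>UNIV. \<nu> i) = 0" and nz: "\<forall>j<m. P j \<noteq> 0"
    and crit: "critical_on_HH m P (frame_mat (\<lambda>i. G *v u i) (\<lambda>i. exp (s * \<nu> i)))"
  shows "(\<Sum>j<m. (\<Sum>i\<in>UNIV. \<nu> i * exp (s * \<nu> i) * coord_weight G u (P j) i) /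
                  (\<Sum>i\<in>UNIV. exp (s * \<nu> i) * coord_weight G u (P j) i)) = 0"
proof -
  define \<gamma> where "\<gamma> = (\<lambda>t. frame_mat (\<lambda>i. G *v u i) (\<lambda>i. exp ((s + t) * \<nu> i)))"
  have geodesic: "(\<forall>t. \<gamma> t \<in> HH) \<and> \<gamma> differentiable (at 0) \<and>
      ((\<lambda>t. DD m P (\<gamma> t)) has_real_derivative
        (\<Sum>j<m. (\<Sum>i\<in>UNIV. \<nu> i * exp (s * \<nu> i) * coord_weight G u (P j) i) /
                  (\<Sum>i\<in>UNIV. exp (s * \<nu> i) * coord_weight G u (P j) i))) (at 0)"
    unfolding \<gamma>_def by (rule DD_geodesic_has_derivative[OF G u dG s0 nz])
  have \<gamma>0: "\<gamma> 0 = frame_mat (\<lambda>i. G *v u i) (\<lambda>i. exp (s * \<nu> i))" by (simp add: \<gamma>_def)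
  have "\<forall>\<gamma>'. (\<forall>t. \<gamma>' t \<in> HH) \<and> \<gamma>' 0 = \<gamma> 0 \<and> \<gamma>' differentiable (at 0)
      \<longrightarrow> ((\<lambda>t. DD m P (\<gamma>' t)) has_real_derivative 0) (at 0)"
    using crit unfolding critical_on_HH_def \<gamma>0 by (rule conjunct2)
  then have "((\<lambda>t. DD m P (\<gamma> t)) has_real_derivative 0) (at 0)"
    using geodesic by (simp only: simp_thms)
  then show ?thesis by (rule DERIV_unique[OF conjunct2[OF conjunct2[OF geodesic]]])
qed

text \<open>Along the geodesic \<open>t \<mapsto> \<Sum>\<^sub>i exp (t \<nu>\<^sub>i) (G u\<^sub>i)(G u\<^sub>i)\<^sup>*\<close> the slope of \<open>D\<close> is a sum of
  exponentially tilted means of \<open>\<nu>\<close>, each nondecreasing in \<open>t\<close>; equal slopes at both ends force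
  \<open>\<nu>\<close> to be constant on the coordinate support of every point.\<close>

lemma critical_pair_constant_on_supports:
  fixes G :: "complex^'n^'n" and \<nu> :: "'n \<Rightarrow> real"
  assumes G: "pos_def_hermitian G" and u: "orthonormal_wrt G u" and dG: "det G = 1"
    and s0: "(\<Sum>i\<in>UNIV. \<nu> i) = 0" and nz: "\<forall>j<m. P j \<noteq> 0"
    and c0: "critical_on_HH m P G"
    and c1: "critical_on_HH m P (frame_mat (\<lambda>i. G *v u i) (\<lambda>i. exp (\<nu> i)))"
    and j: "j < m" and i: "i \<in> coord_support G u (P j)" and k: "k \<in> coord_support G u (P j)"
  shows "\<nu> i = \<nu> k"
proof -
  define a where "a j i = coord_weight G u (P j) i" for j i
  define R where "R s j = (\<Sum>i\<in>UNIV. \<nu> i * exp (s * \<nu> i) * a j i) / (\<Sum>i\<in>UNIV. exp (s * \<nu> i) * a j i)"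
    for s j
  have "critical_on_HH m P (frame_mat (\<lambda>i. G *v u i) (\<lambda>i. exp (0 * \<nu> i)))"
    using c0 frame_mat_mult_one[OF G u] by simp
  from DD_geodesic_slope_critical[OF G u dG s0 nz this]
  have R0: "(\<Sum>j<m. R 0 j) = 0" by (simp add: R_def a_def)
  have R1: "(\<Sum>j<m. R 1 j) = 0"
    using DD_geodesic_slope_critical[OF G u dG s0 nz, of 1] c1 by (simp add: R_def a_def)
  have a_nonneg: "\<And>i. a j i \<ge> 0" for j by (simp add: a_def coord_weight_nonneg)
  have a_sum_pos: "(\<Sum>i\<in>UNIV. a j i) > 0" if "j < m" for j
    using weighted_coord_weight_sum_pos[OF G u, of "P j" "\<lambda>_. 1"] nz that by (simp add: a_def)
  have mono: "R 0 j \<le> R 1 j" if "j < m" for j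
    using exp_tilted_mean_mono(1)[OF a_nonneg a_sum_pos[OF that]] by (simp add: R_def)
  have "(\<Sum>j<m. R 1 j - R 0 j) = 0" using R0 R1 by (simp add: sum_subtractf)
  then have "R 0 j = R 1 j"
    using mono j by (subst (asm) sum_nonneg_eq_0_iff) auto
  then show ?thesis
    using exp_tilted_mean_mono(2)[OF a_nonneg a_sum_pos[OF j], of \<nu> i k] i k
    by (simp add: R_def a_def coord_weight_pos_iff)
qed

lemma critical_point_unique:
  fixes P :: "nat \<Rightarrow> complex^'n"
  assumes nz: "\<forall>j<m. P j \<noteq> 0" and stable: "stable_cluster m P"
    and c1: "critical_on_HH m P Q1" and c2: "critical_on_HH m P Q2"
  shows "Q1 = Q2"
proof -
  have G: "pos_def_hermitian Q1" and dG: "det Q1 = 1" and Q2: "Q2 \<in> HH"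
    using c1 c2 by (auto simp: critical_on_HH_def HH_def)
  obtain u \<nu> where u: "orthonormal_wrt Q1 u" and s0: "(\<Sum>i\<in>UNIV. \<nu> i) = 0"
    and Q2eq: "Q2 = frame_mat (\<lambda>i. Q1 *v u i) (\<lambda>i. exp (\<nu> i))"
    using HH_decomposition[OF G dG Q2] by blast
  have const: "\<nu> i = \<nu> k" for i k
    using critical_pair_constant_on_supports[OF G u dG s0 nz c1 c2[unfolded Q2eq]]
    by (rule stable_constant_on_supports[OF G u stable nz])
  have "\<nu> i = 0" for i
  proof -
    have "(\<Sum>k\<in>(UNIV :: 'n set). \<nu> i) = (\<Sum>k\<in>UNIV. \<nu> k)" by (intro sum.cong) (auto intro: const)
    then have "(\<Sum>k\<in>(UNIV :: 'n set). \<nu> i) = 0" using s0 by simp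
    then show ?thesis by simp
  qed
  then show ?thesis using Q2eq frame_mat_mult_one[OF G u] by simp
qed

section \<open>Properness and existence of the minimum\<close>

text \<open>The Hilbert--Mumford weight of the one-parameter subgroup \<open>diag (exp (t \<nu>))\<close> in the frame \<open>u\<close>:
  it is the slope at infinity of \<open>D\<close> along the corresponding geodesic ray.\<close>

definition weight_fun :: "complex^'n^'n \<Rightarrow> ('n \<Rightarrow> complex^'n) \<Rightarrow> (nat \<Rightarrow> complex^'n) \<Rightarrow> nat \<Rightarrow> ('n \<Rightarrow> real) \<Rightarrow> real" where
  "weight_fun G u P m \<nu> = (\<Sum>j<m. Max (\<nu> ` coord_support G u (P j))) - real m / real CARD('n) * (\<Sum>i\<in>UNIV. \<nu> i)"

lemma Max_image_lower_top_level:
  fixes \<nu> :: "'a \<Rightarrow> real"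
  assumes S: "finite S" and top: "\<And>i. \<nu> i \<le> vmax" and below: "\<And>i. \<nu> i \<noteq> vmax \<Longrightarrow> \<nu> i \<le> v2"
  shows "Max (\<nu> ` S) - Max ((\<lambda>i. if \<nu> i = vmax then v2 else \<nu> i) ` S)
       = (if S \<inter> {i. \<nu> i = vmax} = {} then 0 else vmax - v2)"
proof (cases "S \<inter> {i. \<nu> i = vmax} = {}")
  case False
  then obtain i where i: "i \<in> S" "\<nu> i = vmax" by blast
  have "Max (\<nu> ` S) = vmax" by (rule Max_eqI) (use S i top in auto)
  moreover have "Max ((\<lambda>i. if \<nu> i = vmax then v2 else \<nu> i) ` S) = v2"
    by (rule Max_eqI) (use S i below in auto)
  ultimately show ?thesis using False by simp
next
  case True
  then have "(\<lambda>i. if \<nu> i = vmax then v2 else \<nu> i) ` S = \<nu> ` S" by (auto simp: image_iff)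
  then show ?thesis using True by simp
qed

lemma weight_fun_lower_top_level:
  fixes \<nu> :: "'n::finite \<Rightarrow> real" and P :: "nat \<Rightarrow> complex^'n"
  assumes G: "pos_def_hermitian G" and u: "orthonormal_wrt G u"
    and top: "\<And>i. \<nu> i \<le> vmax" and below: "\<And>i. \<nu> i \<noteq> vmax \<Longrightarrow> \<nu> i \<le> v2" and v2: "v2 \<le> vmax"
  defines "T \<equiv> {i. \<nu> i = vmax}"
  shows "weight_fun G u P m \<nu> - weight_fun G u P m (\<lambda>i. if \<nu> i = vmax then v2 else \<nu> i)
       = (vmax - v2) * stability_margin G u P m T"
proof -
  define \<nu>' where "\<nu>' = (\<lambda>i. if \<nu> i = vmax then v2 else \<nu> i)"
  define E where "E = vec.span (u ` (- T))"
  define cnt where "cnt = card {j. j < m \<and> P j \<in> E}"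
  have max_diff: "Max (\<nu> ` coord_support G u (P j)) - Max (\<nu>' ` coord_support G u (P j))
      = (if P j \<in> E then 0 else vmax - v2)" for j
    using Max_image_lower_top_level[OF _ top below, of "coord_support G u (P j)"]
      coord_support_disjoint_iff[OF G u, of "P j" T]
    by (simp add: \<nu>'_def E_def T_def)
  have "(\<Sum>j<m. Max (\<nu> ` coord_support G u (P j)) - Max (\<nu>' ` coord_support G u (P j)))
      = (\<Sum>j\<in>{..<m} - {j. j < m \<and> P j \<in> E}. vmax - v2)"
    by (simp add: max_diff sum.If_cases Diff_eq Int_def) (auto intro!: arg_cong[where f = card])
  also have "\<dots> = (real m - real cnt) * (vmax - v2)"
  proof -
    have "cnt \<le> m" unfolding cnt_def using card_mono[of "{..<m}" "{j. j < m \<and> P j \<in> E}"] by auto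
    moreover have "card ({..<m} - {j. j < m \<and> P j \<in> E}) = m - cnt"
      using card_Diff_subset[of "{j. j < m \<and> P j \<in> E}" "{..<m}"] by (auto simp: cnt_def)
    ultimately show ?thesis by (simp add: of_nat_diff)
  qed
  finally have sup_part: "(\<Sum>j<m. Max (\<nu> ` coord_support G u (P j))) - (\<Sum>j<m. Max (\<nu>' ` coord_support G u (P j)))
      = (real m - real cnt) * (vmax - v2)" by (simp add: sum_subtractf)
  have "(\<Sum>i\<in>UNIV. \<nu> i) - (\<Sum>i\<in>UNIV. \<nu>' i) = (\<Sum>i\<in>UNIV. if i \<in> T then vmax - v2 else 0)"
    unfolding sum_subtractf[symmetric] by (intro sum.cong) (auto simp: \<nu>'_def T_def)
  then have trace_part: "(\<Sum>i\<in>UNIV. \<nu> i) - (\<Sum>i\<in>UNIV. \<nu>' i) = real (card T) * (vmax - v2)"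
    by (simp add: sum.If_cases)
  have "weight_fun G u P m \<nu> - weight_fun G u P m \<nu>'
      = ((\<Sum>j<m. Max (\<nu> ` coord_support G u (P j))) - (\<Sum>j<m. Max (\<nu>' ` coord_support G u (P j))))
        - real m / real CARD('n) * ((\<Sum>i\<in>UNIV. \<nu> i) - (\<Sum>i\<in>UNIV. \<nu>' i))"
    by (simp add: weight_fun_def right_diff_distrib)
  also have "\<dots> = (real m - real cnt) * (vmax - v2) - real m / real CARD('n) * (real (card T) * (vmax - v2))"
    by (simp only: sup_part trace_part)
  also have "\<dots> = (vmax - v2) * (real m * (real CARD('n) - real (card T)) / real CARD('n) - real cnt)"
    by (simp add: field_simps)
  also have "real CARD('n) - real (card T) = real (card (- T))"
    using card_Un_disjoint[of T "- T"] by simp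
  also have "real m * real (card (- T)) / real CARD('n) - real cnt = stability_margin G u P m T"
    by (simp only: stability_margin_def cnt_def E_def)
  finally show ?thesis by (simp only: \<nu>'_def)
qed

lemma weight_fun_const:
  fixes P :: "nat \<Rightarrow> complex^'n"
  assumes G: "pos_def_hermitian G" and u: "orthonormal_wrt G u" and nz: "\<forall>j<m. P j \<noteq> 0"
    and c: "range \<nu> = {c}"
  shows "weight_fun G u P m \<nu> = 0"
proof -
  have "\<nu> ` coord_support G u (P j) = {c}" if "j < m" for j
  proof -
    have "\<nu> ` coord_support G u (P j) \<subseteq> {c}" using c by auto
    moreover have "coord_support G u (P j) \<noteq> {}" using coord_support_nonempty[OF G u] nz that by auto
    ultimately show ?thesis by auto
  qed
  moreover have "\<nu> i = c" for i using c by blast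
  ultimately have "weight_fun G u P m \<nu> = real m * c - real m / real CARD('n) * (real CARD('n) * c)"
    by (simp add: weight_fun_def)
  then show ?thesis by simp
qed

lemma weight_fun_lower_bound:
  fixes P :: "nat \<Rightarrow> complex^'n"
  assumes G: "pos_def_hermitian G" and u: "orthonormal_wrt G u" and stable: "stable_cluster m P"
    and nz: "\<forall>j<m. P j \<noteq> 0"
  shows "weight_fun G u P m \<nu> \<ge> min_stability_margin G u P m * (Max (range \<nu>) - Min (range \<nu>))"
proof (induction "card (range \<nu>)" arbitrary: \<nu> rule: less_induct)
  case less
  show ?case
  proof (cases "card (range \<nu>) = 1")
    case True
    then obtain c where "range \<nu> = {c}" by (auto simp: card_Suc_eq)
    then show ?thesis using weight_fun_const[OF G u nz] by simp
  next
    case False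
    define vmax where "vmax = Max (range \<nu>)"
    define v2 where "v2 = Max (range \<nu> - {vmax})"
    define \<nu>' where "\<nu>' i = (if \<nu> i = vmax then v2 else \<nu> i)" for i
    have top: "\<nu> i \<le> vmax" for i by (simp add: vmax_def)
    have vmax_in: "vmax \<in> range \<nu>" unfolding vmax_def by (rule Max_in) auto
    have "range \<nu> - {vmax} \<noteq> {}"
    proof
      assume "range \<nu> - {vmax} = {}"
      then have "range \<nu> = {vmax}" using vmax_in by blast
      then show False using False by simp
    qed
    then have v2_in: "v2 \<in> range \<nu> - {vmax}" unfolding v2_def by (intro Max_in) auto
    have below: "\<nu> i \<le> v2" if "\<nu> i \<noteq> vmax" for i using that by (simp add: v2_def)
    have v2: "v2 < vmax" using v2_in top by (auto simp: less_le)
    have range': "range \<nu>' = range \<nu> - {vmax}"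
      using v2_in v2 by (auto simp: \<nu>'_def image_iff split: if_splits)
    have "card (range \<nu>') < card (range \<nu>)"
      unfolding range' by (rule card_Diff1_less) (auto simp: vmax_def)
    moreover have "Min (range \<nu> - {vmax}) = Min (range \<nu>)"
    proof (rule Min_eqI)
      have "Min (range \<nu>) \<le> v2" using v2_in by auto
      then show "Min (range \<nu>) \<in> range \<nu> - {vmax}" using v2 by (auto intro: Min_in)
    qed auto
    ultimately have IH: "weight_fun G u P m \<nu>' \<ge> min_stability_margin G u P m * (v2 - Min (range \<nu>))"
      using less.hyps[of \<nu>'] by (simp add: range' v2_def)
    have T: "{i. \<nu> i = vmax} \<noteq> {}" "{i. \<nu> i = vmax} \<noteq> UNIV"
      using vmax_in v2_in by auto
    have "weight_fun G u P m \<nu> - weight_fun G u P m \<nu>'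
        = (vmax - v2) * stability_margin G u P m {i. \<nu> i = vmax}"
      unfolding \<nu>'_def by (rule weight_fun_lower_top_level[OF G u top below less_imp_le[OF v2]])
    moreover have "min_stability_margin G u P m * (vmax - v2) \<le> (vmax - v2) * stability_margin G u P m {i. \<nu> i = vmax}"
      using min_stability_margin(2)[OF G u stable T] v2 by (simp add: mult.commute)
    ultimately show ?thesis using IH by (simp add: vmax_def[symmetric] algebra_simps)
  qed
qed

lemma norm_vec_le_sum: "norm (x :: 'a::real_normed_vector^'n) \<le> (\<Sum>i\<in>UNIV. norm (x $ i))"
  unfolding norm_vec_def by (rule L2_set_le_sum) simp

lemma norm_orthonormal: "orthonormal_wrt (mat 1) u \<Longrightarrow> norm (u i) = 1"
proof -
  assume u: "orthonormal_wrt (mat 1) u"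
  have "cinner (u i) (u i) = 1" using u by (simp add: orthonormal_wrt_def sesq_mat_1)
  then have "complex_of_real ((norm (u i))^2) = 1" by (simp add: cinner_self_norm)
  then have "(norm (u i))^2 = 1" by (metis of_real_eq_1_iff)
  then show ?thesis using norm_ge_zero[of "u i"] by (auto simp: power2_eq_1_iff)
qed

definition log_weight_sum :: "(nat \<Rightarrow> complex^'n) \<Rightarrow> nat \<Rightarrow> ('n \<Rightarrow> complex^'n) \<Rightarrow> ('n \<Rightarrow> real) \<Rightarrow> real" where
  "log_weight_sum P m u \<nu> = (\<Sum>j<m. ln (\<Sum>i\<in>UNIV. exp (\<nu> i) * coord_weight (mat 1) u (P j) i))"

lemma DD_frame_mat_exp:
  assumes u: "orthonormal_wrt (mat 1) u" and s0: "(\<Sum>i\<in>UNIV. \<nu> i) = 0"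
  shows "DD m P (frame_mat u (\<lambda>i. exp (\<nu> i))) = log_weight_sum P m u \<nu>"
    and "frame_mat u (\<lambda>i. exp (\<nu> i)) \<in> HH"
proof -
  have pr: "(\<Prod>i\<in>UNIV. exp (\<nu> i)) = 1" using s0 by (simp add: exp_sum[symmetric])
  have e: "(\<lambda>i. (mat 1) *v u i) = u" by simp
  show "DD m P (frame_mat u (\<lambda>i. exp (\<nu> i))) = log_weight_sum P m u \<nu>"
    using DD_frame_mat_mult[OF pos_def_hermitian_mat_1 u _ _ pr, of m P] by (simp add: log_weight_sum_def coord_weight_def)
  show "frame_mat u (\<lambda>i. exp (\<nu> i)) \<in> HH"
    using frame_mat_mult_in_HH[OF pos_def_hermitian_mat_1 u _ _ pr] by simp
qed

lemma log_weight_sum_lower_bound: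
  fixes P :: "nat \<Rightarrow> complex^'n"
  assumes uL: "orthonormal_wrt (mat 1) uL" and nz: "\<forall>j<m. P j \<noteq> 0" and b: "\<beta> > 0"
    and near: "\<forall>j<m. \<forall>i\<in>coord_support (mat 1) uL (P j). coord_weight (mat 1) u (P j) i \<ge> \<beta>"
  shows "log_weight_sum P m u \<nu> \<ge> (\<Sum>j<m. Max (\<nu> ` coord_support (mat 1) uL (P j))) + real m * ln \<beta>"
proof -
  have "ln (\<Sum>i\<in>UNIV. exp (\<nu> i) * coord_weight (mat 1) u (P j) i) \<ge> Max (\<nu> ` coord_support (mat 1) uL (P j)) + ln \<beta>"
    if j: "j < m" for j
  proof -
    have ne: "coord_support (mat 1) uL (P j) \<noteq> {}" using coord_support_nonempty[OF pos_def_hermitian_mat_1 uL] nz j by auto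
    have "Max (\<nu> ` coord_support (mat 1) uL (P j)) \<in> \<nu> ` coord_support (mat 1) uL (P j)"
      by (rule Max_in) (use ne in auto)
    then obtain i where i: "i \<in> coord_support (mat 1) uL (P j)" "\<nu> i = Max (\<nu> ` coord_support (mat 1) uL (P j))"
      by (metis imageE)
    have ci: "coord_weight (mat 1) u (P j) i \<ge> \<beta>" using near j i by auto
    have "exp (\<nu> i) * \<beta> \<le> exp (\<nu> i) * coord_weight (mat 1) u (P j) i" using ci by simp
    also have "\<dots> \<le> (\<Sum>i\<in>UNIV. exp (\<nu> i) * coord_weight (mat 1) u (P j) i)"
      by (rule member_le_sum) (auto intro!: mult_nonneg_nonneg coord_weight_nonneg)
    finally have le: "exp (\<nu> i) * \<beta> \<le> (\<Sum>i\<in>UNIV. exp (\<nu> i) * coord_weight (mat 1) u (P j) i)" .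
    have "ln (exp (\<nu> i) * \<beta>) \<le> ln (\<Sum>i\<in>UNIV. exp (\<nu> i) * coord_weight (mat 1) u (P j) i)"
    proof -
      have p1: "0 < exp (\<nu> i) * \<beta>" using b by simp
      then have p2: "0 < (\<Sum>i\<in>UNIV. exp (\<nu> i) * coord_weight (mat 1) u (P j) i)" using le by linarith
      show ?thesis using le p1 p2 by (subst ln_le_cancel_iff) auto
    qed
    then show ?thesis using b i by (simp add: ln_mult)
  qed
  then have "(\<Sum>j<m. Max (\<nu> ` coord_support (mat 1) uL (P j)) + ln \<beta>) \<le> log_weight_sum P m u \<nu>"
    unfolding log_weight_sum_def by (intro sum_mono) auto
  then show ?thesis by (simp add: sum.distrib)
qed

lemma Min_range_le_0_if_sum_0:
  fixes \<nu> :: "'n::finite \<Rightarrow> real"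
  assumes "(\<Sum>i\<in>UNIV. \<nu> i) = 0"
  shows "Min (range \<nu>) \<le> 0"
proof (rule ccontr)
  assume "\<not> ?thesis"
  then have mpos: "Min (range \<nu>) > 0" by (simp only: not_le)
  have "\<nu> i > 0" for i
  proof -
    have "Min (range \<nu>) \<le> \<nu> i" by (rule Min_le) auto
    then show ?thesis using mpos by simp
  qed
  then have "\<forall>i. \<nu> i > 0" by blast
  then have "(\<Sum>i\<in>UNIV. \<nu> i) > 0" by (intro sum_pos) auto
  then show False using assms by simp
qed

lemma coord_weight_tendsto:
  assumes "(f \<longlongrightarrow> v) F"
  shows "((\<lambda>n. coord_weight (mat 1) (\<lambda>i. f n $ i) x i) \<longlongrightarrow> coord_weight (mat 1) (\<lambda>i. v $ i) x i) F"
proof -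
  have h: "((\<lambda>n. f n $ i $ a) \<longlongrightarrow> v $ i $ a) F" for a
    by (rule tendsto_vec_nth[OF tendsto_vec_nth[OF assms]])
  have "((\<lambda>n. (cmod (\<Sum>a\<in>UNIV. cnj (f n $ i $ a) * x $ a))^2) \<longlongrightarrow>
        (cmod (\<Sum>a\<in>UNIV. cnj (v $ i $ a) * x $ a))^2) F"
    by (intro tendsto_power tendsto_norm tendsto_sum tendsto_mult tendsto_cnj h tendsto_const)
  then show ?thesis by (simp add: coord_weight_def sesq_mat_1 cinner_def)
qed

lemma orthonormal_limit:
  assumes lim: "W \<longlonglongrightarrow> lU" and orth: "\<forall>n. orthonormal_wrt (mat 1) (\<lambda>i. W n $ i)"
  shows "orthonormal_wrt (mat 1) (\<lambda>i. lU $ i)"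
  unfolding orthonormal_wrt_def sesq_mat_1
proof (intro allI)
  fix i k
  have h: "((\<lambda>n. W n $ i' $ a) \<longlonglongrightarrow> lU $ i' $ a)" for i' a
    by (rule tendsto_vec_nth[OF tendsto_vec_nth[OF lim]])
  have "(\<lambda>n. cinner (W n $ i) (W n $ k)) \<longlonglongrightarrow> cinner (lU $ i) (lU $ k)"
    unfolding cinner_def by (intro tendsto_sum tendsto_mult tendsto_cnj h)
  moreover have "(\<lambda>n. cinner (W n $ i) (W n $ k)) = (\<lambda>n. if i = k then 1 else 0)"
    using orth by (simp add: orthonormal_wrt_def sesq_mat_1)
  ultimately have "(\<lambda>n. if i = k then 1 else 0 :: complex) \<longlonglongrightarrow> cinner (lU $ i) (lU $ k)" by simp
  then show "cinner (lU $ i) (lU $ k) = (if i = k then 1 else 0)"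
    using LIMSEQ_unique tendsto_const by metis
qed

lemma bounded_orthonormal_frames:
  fixes W :: "nat \<Rightarrow> complex^'n^'n"
  assumes "\<forall>n. orthonormal_wrt (mat 1) (\<lambda>i. W n $ i)"
  shows "bounded (range W)"
  unfolding bounded_iff
proof (intro exI ballI)
  fix y assume "y \<in> range W"
  then obtain n where y: "y = W n" by blast
  have "norm y \<le> (\<Sum>i\<in>UNIV. norm (y $ i))" by (rule norm_vec_le_sum)
  also have "\<dots> = real CARD('n)" using assms norm_orthonormal[of "\<lambda>i. W n $ i"] y by simp
  finally show "norm y \<le> real CARD('n)" .
qed

lemma coord_weight_eventually_ge:
  fixes P :: "nat \<Rightarrow> complex^'n"
  assumes lim: "W \<longlonglongrightarrow> lU"
  shows "\<exists>\<beta>>0. eventually (\<lambda>n. \<forall>j<m. \<forall>i\<in>coord_support (mat 1) (\<lambda>i. lU $ i) (P j).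
            coord_weight (mat 1) (\<lambda>i. W n $ i) (P j) i \<ge> \<beta>) sequentially"
proof -
  define Pairs where "Pairs = {p :: nat \<times> 'n. fst p < m \<and> snd p \<in> coord_support (mat 1) (\<lambda>i. lU $ i) (P (fst p))}"
  have finP: "finite Pairs"
    by (rule finite_subset[of _ "{..<m} \<times> UNIV"]) (auto simp: Pairs_def)
  define cL where "cL p = coord_weight (mat 1) (\<lambda>i. lU $ i) (P (fst p)) (snd p)" for p
  have cLpos: "cL p > 0" if "p \<in> Pairs" for p
    using that by (auto simp: Pairs_def cL_def coord_support_def coord_weight_def)
  define \<beta> where "\<beta> = Min (insert 1 ((\<lambda>p. cL p / 2) ` Pairs))"
  have bpos: "\<beta> > 0" unfolding \<beta>_def using finP cLpos by (subst Min_gr_iff) auto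
  have ble: "\<beta> \<le> cL p / 2" if "p \<in> Pairs" for p
    unfolding \<beta>_def using finP that by (intro Min_le) auto
  have ev: "\<forall>p\<in>Pairs. eventually (\<lambda>n. coord_weight (mat 1) (\<lambda>i. W n $ i) (P (fst p)) (snd p) > cL p / 2) sequentially"
  proof
    fix p assume p: "p \<in> Pairs"
    have "(\<lambda>n. coord_weight (mat 1) (\<lambda>i. W n $ i) (P (fst p)) (snd p)) \<longlonglongrightarrow> cL p"
      unfolding cL_def by (rule coord_weight_tendsto[OF lim])
    moreover have "cL p / 2 < cL p" using cLpos[OF p] by simp
    ultimately show "eventually (\<lambda>n. coord_weight (mat 1) (\<lambda>i. W n $ i) (P (fst p)) (snd p) > cL p / 2) sequentially"
      by (rule order_tendstoD(1))
  qed
  have "eventually (\<lambda>n. \<forall>p\<in>Pairs. coord_weight (mat 1) (\<lambda>i. W n $ i) (P (fst p)) (snd p) > cL p / 2) sequentially"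
    by (rule eventually_ball_finite[OF finP ev])
  then have "eventually (\<lambda>n. \<forall>j<m. \<forall>i\<in>coord_support (mat 1) (\<lambda>i. lU $ i) (P j).
            coord_weight (mat 1) (\<lambda>i. W n $ i) (P j) i \<ge> \<beta>) sequentially"
  proof (rule eventually_mono)
    fix n assume h: "\<forall>p\<in>Pairs. coord_weight (mat 1) (\<lambda>i. W n $ i) (P (fst p)) (snd p) > cL p / 2"
    show "\<forall>j<m. \<forall>i\<in>coord_support (mat 1) (\<lambda>i. lU $ i) (P j). coord_weight (mat 1) (\<lambda>i. W n $ i) (P j) i \<ge> \<beta>"
    proof (intro allI impI ballI)
      fix j i assume "j < m" "i \<in> coord_support (mat 1) (\<lambda>i. lU $ i) (P j)"
      then have p: "(j, i) \<in> Pairs" by (simp add: Pairs_def)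
      show "coord_weight (mat 1) (\<lambda>i. W n $ i) (P j) i \<ge> \<beta>" using h p ble[OF p] by fastforce
    qed
  qed
  then show ?thesis using bpos by blast
qed

lemma log_weight_sum_ge_spread:
  fixes P :: "nat \<Rightarrow> complex^'n"
  assumes uL: "orthonormal_wrt (mat 1) uL" and nz: "\<forall>j<m. P j \<noteq> 0" and stable: "stable_cluster m P"
    and \<beta>: "\<beta> > 0"
    and near: "\<forall>j<m. \<forall>i\<in>coord_support (mat 1) uL (P j). coord_weight (mat 1) u (P j) i \<ge> \<beta>"
    and s0: "(\<Sum>i\<in>UNIV. \<nu> i) = 0"
  shows "log_weight_sum P m u \<nu>
    \<ge> min_stability_margin (mat 1) uL P m * (Max (range \<nu>) - Min (range \<nu>)) + real m * ln \<beta>"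
proof -
  have "(\<Sum>j<m. Max (\<nu> ` coord_support (mat 1) uL (P j))) = weight_fun (mat 1) uL P m \<nu>"
    by (simp add: weight_fun_def s0)
  then show ?thesis
    using log_weight_sum_lower_bound[OF uL nz \<beta> near, of \<nu>]
      weight_fun_lower_bound[OF pos_def_hermitian_mat_1 uL stable nz, of \<nu>]
    by linarith
qed

text \<open>Properness: on a sublevel set of \<open>D\<close> the logarithms of the eigenvalues stay bounded. Otherwise a
  subsequence of the eigenframes converges, and along it \<open>D\<close> grows at least linearly in the spread of
  the eigenvalues, with the slope given by the stability margin of the limit frame.\<close>

lemma log_eigenvalues_bounded_above:
  fixes P :: "nat \<Rightarrow> complex^'n" and U :: "nat \<Rightarrow> complex^'n^'n" and \<nu> :: "nat \<Rightarrow> 'n \<Rightarrow> real"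
  assumes nz: "\<forall>j<m. P j \<noteq> 0" and stable: "stable_cluster m P"
    and orth: "\<forall>k. orthonormal_wrt (mat 1) (\<lambda>i. U k $ i)" and s0: "\<forall>k. (\<Sum>i\<in>UNIV. \<nu> k i) = 0"
    and bound: "\<forall>k. log_weight_sum P m (\<lambda>i. U k $ i) (\<nu> k) \<le> C"
  shows "\<exists>B. \<forall>k i. \<nu> k i \<le> B"
proof (rule ccontr)
  assume "\<not> ?thesis"
  then have "\<forall>n::nat. \<exists>k i. \<nu> k i > real n" by (metis not_le)
  then obtain s t where st: "\<And>n. \<nu> (s n) (t n) > real n" by metis
  have "bounded (range (\<lambda>n. U (s n)))" by (rule bounded_orthonormal_frames) (use orth in auto)
  then obtain lU r where r: "strict_mono r" and lim: "((\<lambda>n. U (s n)) \<circ> r) \<longlonglongrightarrow> lU"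
    using bounded_imp_convergent_subsequence by blast
  define W where "W = (\<lambda>n. U (s (r n)))"
  have limW: "W \<longlonglongrightarrow> lU" using lim by (simp add: W_def comp_def)
  define uL where "uL = (\<lambda>i. lU $ i)"
  have uL: "orthonormal_wrt (mat 1) uL"
    unfolding uL_def by (rule orthonormal_limit[OF limW]) (use orth in \<open>simp add: W_def\<close>)
  obtain \<beta> where \<beta>: "\<beta> > 0" and "eventually (\<lambda>n. \<forall>j<m. \<forall>i\<in>coord_support (mat 1) uL (P j).
            coord_weight (mat 1) (\<lambda>i. W n $ i) (P j) i \<ge> \<beta>) sequentially"
    using coord_weight_eventually_ge[OF limW, of m P] unfolding uL_def by blast
  then obtain N0 where N0: "\<And>n. n \<ge> N0 \<Longrightarrow> \<forall>j<m. \<forall>i\<in>coord_support (mat 1) uL (P j).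
            coord_weight (mat 1) (\<lambda>i. W n $ i) (P j) i \<ge> \<beta>"
    by (auto simp: eventually_sequentially)
  define \<delta> where "\<delta> = min_stability_margin (mat 1) uL P m"
  have \<delta>: "\<delta> > 0" unfolding \<delta>_def by (rule min_stability_margin(1)[OF pos_def_hermitian_mat_1 uL stable])
  have grow: "C \<ge> \<delta> * real n + real m * ln \<beta>" if n: "n \<ge> N0" for n
  proof -
    define \<mu> where "\<mu> = \<nu> (s (r n))"
    have s0n: "(\<Sum>i\<in>UNIV. \<mu> i) = 0" using s0 by (simp add: \<mu>_def)
    have max: "\<mu> (t (r n)) \<le> Max (range \<mu>)" by (rule Max_ge) auto
    have "real n \<le> real (r n)" using seq_suble[OF r, of n] by simp
    also have "\<dots> < \<mu> (t (r n))" using st by (simp add: \<mu>_def)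
    also have "\<dots> \<le> Max (range \<mu>) - Min (range \<mu>)"
      using Min_range_le_0_if_sum_0[OF s0n] max by linarith
    finally have "\<delta> * real n \<le> \<delta> * (Max (range \<mu>) - Min (range \<mu>))" using \<delta> by simp
    also have "\<dots> + real m * ln \<beta> \<le> log_weight_sum P m (\<lambda>i. W n $ i) \<mu>"
      unfolding \<delta>_def by (rule log_weight_sum_ge_spread[OF uL nz stable \<beta> N0[OF n] s0n])
    also have "\<dots> \<le> C" using bound by (simp add: W_def \<mu>_def)
    finally show ?thesis by simp
  qed
  obtain n where n: "real n > (C - real m * ln \<beta>) / \<delta>" using reals_Archimedean2 by blast
  then have "C - real m * ln \<beta> < \<delta> * real n" using \<delta> by (simp add: pos_divide_less_eq mult.commute)
  also have "\<dots> \<le> \<delta> * real (max n N0)" using \<delta> by (intro mult_left_mono) auto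
  finally have "C - real m * ln \<beta> < \<delta> * real (max n N0)" .
  then show False using grow[of "max n N0"] by simp
qed

lemma abs_le_if_sum_0_bounded_above:
  fixes \<nu> :: "'n::finite \<Rightarrow> real"
  assumes s0: "(\<Sum>i\<in>UNIV. \<nu> i) = 0" and B: "\<And>i. \<nu> i \<le> B"
  shows "\<bar>\<nu> i\<bar> \<le> real CARD('n) * \<bar>B\<bar>"
proof -
  have "\<nu> i \<le> \<bar>B\<bar>" using B[of i] by linarith
  also have "\<dots> \<le> real CARD('n) * \<bar>B\<bar>" using mult_right_mono[of 1 "real CARD('n)" "\<bar>B\<bar>"] by simp
  finally have upper: "\<nu> i \<le> real CARD('n) * \<bar>B\<bar>" .
  have "(\<Sum>l\<in>UNIV - {i}. \<nu> l) \<le> (\<Sum>l\<in>UNIV - {i}. \<bar>B\<bar>)"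
    by (rule sum_mono) (use B abs_ge_self order_trans in blast)
  also have "\<dots> \<le> (\<Sum>l\<in>(UNIV :: 'n set). \<bar>B\<bar>)" by (rule sum_mono2) auto
  finally have "(\<Sum>l\<in>UNIV - {i}. \<nu> l) \<le> real CARD('n) * \<bar>B\<bar>" by simp
  moreover have "\<nu> i = - (\<Sum>l\<in>UNIV - {i}. \<nu> l)" using s0 sum.remove[of UNIV i \<nu>] by simp
  ultimately show ?thesis using upper by linarith
qed

lemma log_weight_sum_tendsto:
  fixes P :: "nat \<Rightarrow> complex^'n"
  assumes U: "U \<longlonglongrightarrow> lU" and V: "V \<longlonglongrightarrow> lV" and nz: "\<forall>j<m. P j \<noteq> 0"
    and orth: "orthonormal_wrt (mat 1) (\<lambda>i. lU $ i)"
  shows "(\<lambda>n. log_weight_sum P m (\<lambda>i. U n $ i) (\<lambda>i. V n $ i))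
    \<longlonglongrightarrow> log_weight_sum P m (\<lambda>i. lU $ i) (\<lambda>i. lV $ i)"
  unfolding log_weight_sum_def
proof (rule tendsto_sum, rule tendsto_ln)
  fix j assume j: "j \<in> {..<m}"
  show "(\<lambda>n. \<Sum>i\<in>UNIV. exp (V n $ i) * coord_weight (mat 1) (\<lambda>i. U n $ i) (P j) i) \<longlonglongrightarrow>
        (\<Sum>i\<in>UNIV. exp (lV $ i) * coord_weight (mat 1) (\<lambda>i. lU $ i) (P j) i)"
    by (intro tendsto_sum tendsto_mult tendsto_exp coord_weight_tendsto[OF U] tendsto_vec_nth V)
  show "(\<Sum>i\<in>UNIV. exp (lV $ i) * coord_weight (mat 1) (\<lambda>i. lU $ i) (P j) i) \<noteq> 0"
    using weighted_coord_weight_sum_pos[OF pos_def_hermitian_mat_1 orth, of "P j" "\<lambda>i. exp (lV $ i)"] nz j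
    by simp
qed

lemma DD_subsequence_limit:
  fixes P :: "nat \<Rightarrow> complex^'n" and Q :: "nat \<Rightarrow> complex^'n^'n"
  assumes nz: "\<forall>j<m. P j \<noteq> 0" and stable: "stable_cluster m P"
    and QH: "\<And>k. Q k \<in> HH" and bd: "\<And>k. DD m P (Q k) \<le> C"
  obtains Qs r where "Qs \<in> HH" "strict_mono r" "(\<lambda>n. DD m P (Q (r n))) \<longlonglongrightarrow> DD m P Qs"
proof -
  have "\<exists>U V. orthonormal_wrt (mat 1) (\<lambda>i. U $ i) \<and> (\<Sum>i\<in>UNIV. V $ i) = 0 \<and>
      Q k = frame_mat (\<lambda>i. U $ i) (\<lambda>i. exp (V $ i))" for k
  proof -
    obtain u \<nu> where "orthonormal_wrt (mat 1) u" "(\<Sum>i\<in>UNIV. \<nu> i) = 0"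
      "Q k = frame_mat (\<lambda>i. mat 1 *v u i) (\<lambda>i. exp (\<nu> i))"
      using HH_decomposition[OF pos_def_hermitian_mat_1 _ QH] by auto
    then show ?thesis by (intro exI[of _ "\<chi> i. u i"] exI[of _ "\<chi> i. \<nu> i"]) simp
  qed
  then obtain U V where orth: "\<And>k. orthonormal_wrt (mat 1) (\<lambda>i. U k $ i)"
    and s0: "\<And>k. (\<Sum>i\<in>UNIV. V k $ i) = 0"
    and Qk: "\<And>k. Q k = frame_mat (\<lambda>i. U k $ i) (\<lambda>i. exp (V k $ i))"
    by metis
  have DQ: "DD m P (Q k) = log_weight_sum P m (\<lambda>i. U k $ i) (\<lambda>i. V k $ i)" for k
    unfolding Qk by (rule DD_frame_mat_exp(1)[OF orth s0])
  obtain B where B: "\<And>k i. V k $ i \<le> B"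
    using log_eigenvalues_bounded_above[OF nz stable, of U "\<lambda>k i. V k $ i" C] orth s0 bd DQ by auto
  have "norm (V k) \<le> real CARD('n) * (real CARD('n) * \<bar>B\<bar>)" for k
  proof -
    have "norm (V k) \<le> (\<Sum>i\<in>UNIV. norm (V k $ i))" by (rule norm_vec_le_sum)
    also have "\<dots> \<le> (\<Sum>i\<in>(UNIV :: 'n set). real CARD('n) * \<bar>B\<bar>)"
      by (rule sum_mono) (simp add: abs_le_if_sum_0_bounded_above[OF s0 B])
    finally show ?thesis by simp
  qed
  then have "bounded (range V)" by (auto simp: bounded_iff)
  then obtain lV r1 where r1: "strict_mono r1" and limV: "(V \<circ> r1) \<longlonglongrightarrow> lV"
    using bounded_imp_convergent_subsequence by blast
  have "bounded (range (U \<circ> r1))"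
    using bounded_orthonormal_frames[of "U \<circ> r1"] orth by simp
  then obtain lU r2 where r2: "strict_mono r2" and limU: "(U \<circ> r1 \<circ> r2) \<longlonglongrightarrow> lU"
    using bounded_imp_convergent_subsequence by blast
  have limV': "(V \<circ> r1 \<circ> r2) \<longlonglongrightarrow> lV" using LIMSEQ_subseq_LIMSEQ[OF limV r2] .
  have uL: "orthonormal_wrt (mat 1) (\<lambda>i. lU $ i)"
    by (rule orthonormal_limit[OF limU]) (simp add: orth)
  have "(\<lambda>n. \<Sum>i\<in>UNIV. (V \<circ> r1 \<circ> r2) n $ i) \<longlonglongrightarrow> (\<Sum>i\<in>UNIV. lV $ i)"
    by (intro tendsto_sum tendsto_vec_nth limV')
  then have s0L: "(\<Sum>i\<in>UNIV. lV $ i) = 0" by (simp add: s0 LIMSEQ_const_iff)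
  show thesis
  proof (rule that)
    show "frame_mat (\<lambda>i. lU $ i) (\<lambda>i. exp (lV $ i)) \<in> HH" by (rule DD_frame_mat_exp(2)[OF uL s0L])
    show "strict_mono (r1 \<circ> r2)" using r1 r2 by (rule strict_mono_o)
    show "(\<lambda>n. DD m P (Q ((r1 \<circ> r2) n))) \<longlonglongrightarrow> DD m P (frame_mat (\<lambda>i. lU $ i) (\<lambda>i. exp (lV $ i)))"
      using log_weight_sum_tendsto[OF limU limV' nz uL]
      by (simp add: DQ DD_frame_mat_exp(1)[OF uL s0L] comp_def)
  qed
qed

lemma DD_bdd_below:
  fixes P :: "nat \<Rightarrow> complex^'n"
  assumes nz: "\<forall>j<m. P j \<noteq> 0" and stable: "stable_cluster m P"
  shows "bdd_below (DD m P ` HH)"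
proof (rule ccontr)
  assume unbdd: "\<not> bdd_below (DD m P ` HH)"
  have "\<exists>Q\<in>HH. DD m P Q < - real k" for k :: nat
  proof (rule ccontr)
    assume "\<not> ?thesis"
    then have "bdd_below (DD m P ` HH)" by (intro bdd_belowI2[of _ "- real k"]) (auto simp: not_less)
    with unbdd show False by contradiction
  qed
  then obtain Q where QH: "\<And>k. Q k \<in> HH" and Ql: "\<And>k. DD m P (Q k) < - real k" by metis
  have bd: "DD m P (Q k) \<le> 0" for k using Ql[of k] by linarith
  obtain Qs r where r: "strict_mono r" and lim: "(\<lambda>n. DD m P (Q (r n))) \<longlonglongrightarrow> DD m P Qs"
    using DD_subsequence_limit[OF nz stable QH bd] .
  obtain N0 where N0: "\<And>n. n \<ge> N0 \<Longrightarrow> DD m P (Q (r n)) > DD m P Qs - 1"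
    using order_tendstoD(1)[OF lim, of "DD m P Qs - 1"] by (auto simp: eventually_sequentially)
  define n where "n = max N0 (nat \<lceil>1 - DD m P Qs\<rceil>)"
  have "1 - DD m P Qs \<le> real n" unfolding n_def by linarith
  also have "\<dots> \<le> real (r n)" using seq_suble[OF r, of n] by simp
  finally show False using N0[of n] Ql[of "r n"] by (simp add: n_def)
qed

lemma DD_attains_min:
  fixes P :: "nat \<Rightarrow> complex^'n"
  assumes nz: "\<forall>j<m. P j \<noteq> 0" and stable: "stable_cluster m P"
  obtains Q0 where "Q0 \<in> HH" "\<And>Q. Q \<in> HH \<Longrightarrow> DD m P Q0 \<le> DD m P Q"
proof -
  define L where "L = Inf (DD m P ` HH)"
  have bdd: "bdd_below (DD m P ` HH)" by (rule DD_bdd_below[OF nz stable])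
  have "\<exists>Q\<in>HH. DD m P Q < L + inverse (real (Suc k))" for k :: nat
  proof -
    have "Inf (DD m P ` HH) < L + inverse (real (Suc k))" by (simp add: L_def)
    then show ?thesis using cInf_less_iff[OF _ bdd] mat_1_in_HH by blast
  qed
  then obtain Q where QH: "\<And>k. Q k \<in> HH" and Ql: "\<And>k. DD m P (Q k) < L + inverse (real (Suc k))"
    by metis
  have bd: "DD m P (Q k) \<le> L + 1" for k
    using Ql[of k] inverse_le_1_iff[of "real (Suc k)"] by simp
  obtain Qs r where Qs: "Qs \<in> HH" and r: "strict_mono r"
    and lim: "(\<lambda>n. DD m P (Q (r n))) \<longlonglongrightarrow> DD m P Qs"
    using DD_subsequence_limit[OF nz stable QH bd] .
  have "(\<lambda>n. inverse (real (Suc (r n)))) \<longlonglongrightarrow> 0"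
    using LIMSEQ_subseq_LIMSEQ[OF LIMSEQ_inverse_real_of_nat r] by (simp add: comp_def)
  then have "(\<lambda>n. L + inverse (real (Suc (r n)))) \<longlonglongrightarrow> L + 0" by (intro tendsto_add tendsto_const)
  then have "DD m P Qs \<le> L + 0" by (rule LIMSEQ_le[OF lim]) (use Ql less_imp_le in blast)
  then have "DD m P Qs \<le> DD m P Q" if "Q \<in> HH" for Q
    using cInf_lower[OF _ bdd, of "DD m P Q"] that by (simp add: L_def)
  with Qs that show thesis by blast
qed

lemma DD_scale_points:
  assumes Q: "Q \<in> HH" and nz: "\<forall>j<m. P j \<noteq> 0" and c: "\<forall>j<m. c j \<noteq> 0"
  shows "DD m (\<lambda>j. c j *s P j) Q = DD m P Q + (\<Sum>j<m. ln ((cmod (c j))^2))"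
proof -
  have "ln (Re (herm_form (c j *s P j) Q)) = ln (Re (herm_form (P j) Q)) + ln ((cmod (c j))^2)"
    if j: "j < m" for j
  proof -
    have h: "herm_form (c j *s P j) Q = of_real ((cmod (c j))^2) * herm_form (P j) Q"
      by (simp add: herm_form_eq_sesq sesq_scaled_self cnj_mult_self)
    have p1: "Re (herm_form (P j) Q) > 0" using HH_herm_form_pos[OF Q] nz j by simp
    have p2: "(cmod (c j))^2 > 0" using c j by simp
    show ?thesis using p1 p2 by (simp add: h ln_mult)
  qed
  then show ?thesis using Q by (simp add: DD_on_HH sum.distrib)
qed

lemma critical_scale_points:
  assumes cr: "critical_on_HH m P Q" and nz: "\<forall>j<m. P j \<noteq> 0" and c: "\<forall>j<m. c j \<noteq> 0"
  shows "critical_on_HH m (\<lambda>j. c j *s P j) Q"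
  unfolding critical_on_HH_def
proof (intro conjI allI impI)
  show "Q \<in> HH" using cr by (simp add: critical_on_HH_def)
  fix \<gamma> :: "real \<Rightarrow> complex^'a^'a"
  assume h: "(\<forall>t. \<gamma> t \<in> HH) \<and> \<gamma> 0 = Q \<and> \<gamma> differentiable at 0"
  have d: "((\<lambda>t. DD m P (\<gamma> t)) has_real_derivative 0) (at 0)"
    using cr h unfolding critical_on_HH_def by blast
  have f: "(\<lambda>t. DD m (\<lambda>j. c j *s P j) (\<gamma> t)) = (\<lambda>t. DD m P (\<gamma> t) + (\<Sum>j<m. ln ((cmod (c j))^2)))"
    using h DD_scale_points[OF _ nz c] by auto
  show "((\<lambda>t. DD m (\<lambda>j. c j *s P j) (\<gamma> t)) has_real_derivative 0) (at 0)"
    unfolding f using DERIV_add[OF d DERIV_const] by simp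
qed

theorem mainTheorem3:
  fixes m :: nat and P :: "nat \<Rightarrow> complex^'n"
  assumes nonzero: "\<And>j. j < m \<Longrightarrow> P j \<noteq> 0"
    and stable: "stable_cluster m P"
  shows "(\<exists>!Q. critical_on_HH m P Q) \<and>
    (\<forall>Q. critical_on_HH m P Q \<longrightarrow>
       (\<forall>Q'\<in>HH. DD m P Q \<le> DD m P Q') \<and>
       (\<exists>\<theta>>0. DD m P Q = ln \<theta>) \<and>
       (\<forall>c :: nat \<Rightarrow> complex. (\<forall>j<m. c j \<noteq> 0) \<longrightarrow>
          critical_on_HH m (\<lambda>j. c j *s P j) Q))"
proof -
  have nz: "\<forall>j<m. P j \<noteq> 0" using nonzero by blast
  obtain Q0 where Q0: "Q0 \<in> HH" and min: "\<And>Q. Q \<in> HH \<Longrightarrow> DD m P Q0 \<le> DD m P Q"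
    using DD_attains_min[OF nz stable] by blast
  have crit: "critical_on_HH m P Q0" by (rule critical_if_minimum[OF Q0 _ nz]) (simp add: min)
  have unique: "Q = Q0" if "critical_on_HH m P Q" for Q
    using critical_point_unique[OF nz stable that crit] .
  show ?thesis
  proof (intro conjI allI impI ex1I[of _ Q0] crit)
    fix Q assume "critical_on_HH m P Q"
    then have "Q = Q0" by (rule unique)
    then show "\<forall>Q'\<in>HH. DD m P Q \<le> DD m P Q'" and "\<exists>\<theta>>0. DD m P Q = ln \<theta>"
      and "\<And>c. \<forall>j<m. c j \<noteq> 0 \<Longrightarrow> critical_on_HH m (\<lambda>j. c j *s P j) Q"
      using min crit critical_scale_points[OF _ nz] by (auto intro: exI[of _ "exp (DD m P Q)"])
  qed (rule unique)
qed

end
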